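(* Let $\mathcal{C}=[0,1]^3\subset\mathbb{R}^3$ be the unit cube with faces labelled $1,\dots,6$ so that the pairs of opposite (parallel) faces are $\{1,2\}$, $\{3,4\}$, $\{5,6\}$, and let $T=\{e_1+e_2,\,e_3+e_4,\,e_5+e_6\}\subset\mathbb{F}_2^6$. Let $\lambda$ be a proper colouring of $\mathcal{C}$ with values in $\mathbb{F}_2^k$, $k\ge3$, such that $M_\lambda=\mathbb{R}^3/\ker\lambda$ is orientable, and let $\Lambda$ be its defining matrix. Then: (i) if $\mathrm{Row}(\Lambda)\cap T=T$, then $M_\lambda$ is homeomorphic to the $3$-torus; (ii) if $\emptyset\ne\mathrm{Row}(\Lambda)\cap T\subsetneq T$, then $M_\lambda$ is homeomorphic to the half-turn manifold $\mathfrak{F}_2$; (iii) if $\mathrm{Row}(\Lambda)\cap T=\emptyset$, then $M_\lambda$ is homeomorphic to the Hantzsche--Wendt manifold.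
   Context: A colouring of $\mathcal{C}$ is a map $\lambda$ from the set of faces $\{1,\dots,6\}$ to $\mathbb{F}_2^k$ whose image spans $\mathbb{F}_2^k$; it is proper if at each vertex of the cube the colours of the three faces containing it are linearly independent. It induces a homomorphism $\lambda$ from the right-angled Coxeter group generated by the reflections of $\mathbb{R}^3$ in the faces of $\mathcal{C}$ to $\mathbb{F}_2^k$, sending the reflection in face $i$ to $\lambda(i)$. The defining matrix $\Lambda$ is the $k\times6$ matrix over $\mathbb{F}_2$ whose $i$-th column is $\lambda(i)$; $\mathrm{Row}(\Lambda)\subset\mathbb{F}_2^6$ is its row space; $e_i$ is the $i$-th standard basis vector of $\mathbb{F}_2^6$. $\mathfrak{F}_2$ denotes the closed orientable flat $3$-manifold given as the mapping torus of the rotation by $\pi$ (the map $-\mathrm{id}$) of the flat $2$-torus (described in the paper as the unique orientable Euclidean circle bundle over the Klein bottle). The Hantzsche--Wendt manifold is the closed orientable flat $3$-manifold with vanishing first rational Betti number. *)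

theory Defs
  imports "HOL-Analysis.Analysis" "HOL-Library.Z2"
begin

datatype face = F1 | F2 | F3 | F4 | F5 | F6

lemma UNIV_face: "(UNIV :: face set) = {F1, F2, F3, F4, F5, F6}"
  using face.exhaust by auto

instance face :: finite
  by standard (simp add: UNIV_face)

fun face_axis :: "face \<Rightarrow> 3" where
  "face_axis F1 = 1" | "face_axis F2 = 1"
| "face_axis F3 = 2" | "face_axis F4 = 2"
| "face_axis F5 = 3" | "face_axis F6 = 3"

fun face_level :: "face \<Rightarrow> real" where
  "face_level F1 = 0" | "face_level F2 = 1"
| "face_level F3 = 0" | "face_level F4 = 1"
| "face_level F5 = 0" | "face_level F6 = 1"

definition face_reflection :: "face \<Rightarrow> real^3 \<Rightarrow> real^3" where
  "face_reflection i x =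
     (\<chi> j. if j = face_axis i then 2 * face_level i - x $ j else x $ j)"

definition word_eval :: "face list \<Rightarrow> real^3 \<Rightarrow> real^3" where
  "word_eval w = foldr (\<lambda>i f. face_reflection i \<circ> f) w id"

definition coxeter_group :: "(real^3 \<Rightarrow> real^3) set" where
  "coxeter_group = {word_eval w | w. True}"

definition colouring :: "(face \<Rightarrow> bit^'k) \<Rightarrow> bool" where
  "colouring lam \<longleftrightarrow> vec.span (range lam) = UNIV"

text \<open>Proper: at each vertex (one face from each opposite pair) the three
  colours are linearly independent (as a family, i.e. distinct and independent).\<close>
definition proper_colouring :: "(face \<Rightarrow> bit^'k) \<Rightarrow> bool" where
  "proper_colouring lam \<longleftrightarrow> colouring lam \<and>
     (\<forall>a\<in>{F1,F2}. \<forall>b\<in>{F3,F4}. \<forall>c\<in>{F5,F6}.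
        card {lam a, lam b, lam c} = 3 \<and> vec.independent {lam a, lam b, lam c})"

text \<open>Kernel of the induced homomorphism W \<rightarrow> F_2^k (reflection in face i \<mapsto> lam i).\<close>
definition colouring_kernel :: "(face \<Rightarrow> bit^'k) \<Rightarrow> (real^3 \<Rightarrow> real^3) set" where
  "colouring_kernel lam = {word_eval w | w. sum_list (map lam w) = 0}"

definition defining_row :: "(face \<Rightarrow> bit^'k) \<Rightarrow> 'k \<Rightarrow> bit^face" where
  "defining_row lam m = (\<chi> i. lam i $ m)"

definition row_space :: "(face \<Rightarrow> bit^'k) \<Rightarrow> (bit^face) set" where
  "row_space lam = vec.span (range (defining_row lam))"

definition T_set :: "(bit^face) set" where
  "T_set = {axis F1 1 + axis F2 1, axis F3 1 + axis F4 1, axis F5 1 + axis F6 1}"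

definition orbit_rel :: "('a \<Rightarrow> 'a) set \<Rightarrow> ('a \<times> 'a) set" where
  "orbit_rel G = {(x, y). \<exists>g\<in>G. g x = y}"

definition orbit_space_open :: "('a::topological_space \<Rightarrow> 'a) set \<Rightarrow> 'a set set \<Rightarrow> bool" where
  "orbit_space_open G U \<longleftrightarrow> U \<subseteq> UNIV // orbit_rel G \<and>
      open {x. orbit_rel G `` {x} \<in> U}"

lemma istopology_orbit_space_open: "istopology (orbit_space_open G)"
proof -
  have U: "{x. orbit_rel G `` {x} \<in> \<Union>K} = (\<Union>S\<in>K. {x. orbit_rel G `` {x} \<in> S})"
    for K :: "'a set set set" by auto
  have I: "{x. orbit_rel G `` {x} \<in> S \<inter> T} = {x. orbit_rel G `` {x} \<in> S} \<inter> {x. orbit_rel G `` {x} \<in> T}"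
    for S T :: "'a set set" by auto
  show ?thesis
    unfolding istopology_def orbit_space_open_def U I
    by (auto intro!: open_Int open_UN)
qed

definition orbit_space :: "('a::topological_space \<Rightarrow> 'a) set \<Rightarrow> 'a set topology" where
  "orbit_space G = topology (orbit_space_open G)"

definition M_lam :: "(face \<Rightarrow> bit^'k) \<Rightarrow> (real^3) set topology" where
  "M_lam lam = orbit_space (colouring_kernel lam)"

text \<open>Orientability of R^3/ker lam: every deck transformation preserves orientation.\<close>
definition orientable_colouring :: "(face \<Rightarrow> bit^'k) \<Rightarrow> bool" where
  "orientable_colouring lam \<longleftrightarrow>
     (\<forall>g\<in>colouring_kernel lam. det (matrix (\<lambda>x. g x - g 0)) > 0)"

inductive_set gen_group :: "('a \<Rightarrow> 'a) set \<Rightarrow> ('a \<Rightarrow> 'a) set" for S where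
  gen_id: "id \<in> gen_group S"
| gen_mult: "g \<in> S \<Longrightarrow> h \<in> gen_group S \<Longrightarrow> g \<circ> h \<in> gen_group S"
| gen_inv: "g \<in> S \<Longrightarrow> h \<in> gen_group S \<Longrightarrow> inv g \<circ> h \<in> gen_group S"

definition vec3 :: "real \<Rightarrow> real \<Rightarrow> real \<Rightarrow> real^3" where
  "vec3 a b c = vector [a, b, c]"

definition torus3 :: "(real^3) set topology" where
  "torus3 = orbit_space (gen_group
     {(\<lambda>x. x + vec3 1 0 0), (\<lambda>x. x + vec3 0 1 0), (\<lambda>x. x + vec3 0 0 1)})"

text \<open>Half-turn manifold: mapping torus of -id on R^2/Z^2.\<close>
definition half_turn_manifold :: "(real^3) set topology" where
  "half_turn_manifold = orbit_space (gen_group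
     {(\<lambda>x. x + vec3 1 0 0), (\<lambda>x. x + vec3 0 1 0),
      (\<lambda>x. vec3 (- x$1) (- x$2) (x$3 + 1))})"

definition hantzsche_wendt :: "(real^3) set topology" where
  "hantzsche_wendt = orbit_space (gen_group
     {(\<lambda>x. vec3 (x$1 + 1/2) (- x$2 + 1/2) (- x$3)),
      (\<lambda>x. vec3 (- x$1) (x$2 + 1/2) (- x$3 + 1/2)),
      (\<lambda>x. vec3 (- x$1 + 1/2) (- x$2) (x$3 + 1/2))})"

end

theory Submission
  imports Defs
begin

text \<open>The reflection group of the cube consists of the maps
  \<open>x \<mapsto> (\<plusminus>x\<^sub>1 + 2m\<^sub>1, \<plusminus>x\<^sub>2 + 2m\<^sub>2, \<plusminus>x\<^sub>3 + 2m\<^sub>3)\<close>, and a colouring only sees the signs and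
  the parities of the \<open>m\<^sub>i\<close>; so \<open>\<Gamma> = ker \<lambda>\<close> is a group of such maps containing all translations by
  \<open>4\<int>\<^sup>3\<close>. Its holonomy \<open>H\<close>, the set of sign patterns occurring in \<open>\<Gamma>\<close>, consists of even sign changes
  when \<open>M\<^sub>\<lambda>\<close> is orientable, so it is trivial, of order 2, or the whole Klein four-group. Since the row
  space is the annihilator of the relations among the colours, \<open>e\<^sub>2\<^sub>j\<^sub>-\<^sub>1 + e\<^sub>2\<^sub>j\<close> lies in it exactly
  when no element of \<open>H\<close> flips the \<open>j\<close>-th axis; thus the three cases of the statement are the three
  possibilities for \<open>H\<close>. Properness makes every element of order-two holonomy a screw motion, and
  then a triangular basis of the translation lattice of \<open>\<Gamma>\<close> gives an affine change of coordinates
  conjugating \<open>\<Gamma>\<close> onto the standard Bieberbach group of the 3-torus, of the half-turn manifold, or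
  of the Hantzsche-Wendt manifold.\<close>

section \<open>Orbit spaces\<close>

lemma openin_orbit_space: "openin (orbit_space G) U \<longleftrightarrow> orbit_space_open G U"
  unfolding orbit_space_def using istopology_orbit_space_open topology_inverse' by metis

lemma topspace_orbit_space: "topspace (orbit_space G) = UNIV // orbit_rel G"
proof -
  have "{x. orbit_rel G `` {x} \<in> UNIV // orbit_rel G} = UNIV"
    by (auto simp: quotient_def)
  then have "orbit_space_open G (UNIV // orbit_rel G)"
    by (simp add: orbit_space_open_def)
  then show ?thesis
    unfolding topspace_def openin_orbit_space orbit_space_open_def by blast
qed

lemma orbit_rel_Image_conj:
  assumes hg: "\<And>x. h (g x) = x" and gh: "\<And>y. g (h y) = y"
    and rel: "\<And>x x'. (g x, g x') \<in> orbit_rel K \<longleftrightarrow> (x, x') \<in> orbit_rel G"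
  shows "orbit_rel K `` {g x} = g ` (orbit_rel G `` {x})"
proof
  show "orbit_rel K `` {g x} \<subseteq> g ` (orbit_rel G `` {x})"
  proof
    fix y assume "y \<in> orbit_rel K `` {g x}"
    then have "(x, h y) \<in> orbit_rel G" using rel gh by (metis Image_singleton_iff)
    then show "y \<in> g ` (orbit_rel G `` {x})" using gh by (metis ImageI image_eqI singletonI)
  qed
  show "g ` (orbit_rel G `` {x}) \<subseteq> orbit_rel K `` {g x}"
    using rel by auto
qed

lemma continuous_map_orbit_space_image:
  fixes g :: "'a::topological_space \<Rightarrow> 'b::topological_space"
  assumes cont: "continuous_on UNIV g" and hg: "\<And>x. h (g x) = x" and gh: "\<And>y. g (h y) = y"
    and rel: "\<And>x x'. (g x, g x') \<in> orbit_rel K \<longleftrightarrow> (x, x') \<in> orbit_rel G"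
  shows "continuous_map (orbit_space G) (orbit_space K) (image g)"
  unfolding continuous_map_def
proof (intro conjI allI impI)
  note orbit_image = orbit_rel_Image_conj[OF hg gh rel]
  show "image g \<in> topspace (orbit_space G) \<rightarrow> topspace (orbit_space K)"
    by (auto simp: topspace_orbit_space quotient_def simp flip: orbit_image)
  fix U assume "openin (orbit_space K) U"
  then have U: "U \<subseteq> UNIV // orbit_rel K" "open {y. orbit_rel K `` {y} \<in> U}"
    unfolding openin_orbit_space orbit_space_open_def by auto
  have "{x. orbit_rel G `` {x} \<in> {C \<in> topspace (orbit_space G). g ` C \<in> U}}
      = g -` {y. orbit_rel K `` {y} \<in> U}"
    unfolding topspace_orbit_space by (auto simp: orbit_image quotient_def)
  moreover have "open (g -` {y. orbit_rel K `` {y} \<in> U})"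
    using cont U(2) unfolding continuous_on_open_vimage[OF open_UNIV] by (simp del: vimage_Collect_eq)
  ultimately show "openin (orbit_space G) {C \<in> topspace (orbit_space G). g ` C \<in> U}"
    unfolding openin_orbit_space orbit_space_open_def by (simp add: topspace_orbit_space)
qed

lemma homeomorphic_orbit_spaces:
  fixes g :: "'a::topological_space \<Rightarrow> 'b::topological_space"
  assumes "continuous_on UNIV g" "continuous_on UNIV h"
    and hg: "\<And>x. h (g x) = x" and gh: "\<And>y. g (h y) = y"
    and rel: "\<And>x x'. (g x, g x') \<in> orbit_rel K \<longleftrightarrow> (x, x') \<in> orbit_rel G"
  shows "orbit_space K homeomorphic_space orbit_space G"
proof -
  have rel': "(h y, h y') \<in> orbit_rel G \<longleftrightarrow> (y, y') \<in> orbit_rel K" for y y'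
    using rel[of "h y" "h y'"] gh by simp
  have "homeomorphic_maps (orbit_space G) (orbit_space K) (image g) (image h)"
    unfolding homeomorphic_maps_def image_image hg gh
    using continuous_map_orbit_space_image[OF assms(1) hg gh rel]
      continuous_map_orbit_space_image[OF assms(2) gh hg rel'] by simp
  then show ?thesis
    using homeomorphic_space_def homeomorphic_space_sym by blast
qed

section \<open>Diagonal isometries of \<open>\<real>\<^sup>3\<close>\<close>

definition flip_sign :: "bool \<Rightarrow> real" where
  "flip_sign b = (if b then -1 else 1)"

definition diag_isom :: "bool \<Rightarrow> bool \<Rightarrow> bool \<Rightarrow> real \<Rightarrow> real \<Rightarrow> real \<Rightarrow> real^3 \<Rightarrow> real^3" where
  "diag_isom e1 e2 e3 t1 t2 t3 x =
     vec3 (flip_sign e1 * x$1 + t1) (flip_sign e2 * x$2 + t2) (flip_sign e3 * x$3 + t3)"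

abbreviation translation :: "real \<Rightarrow> real \<Rightarrow> real \<Rightarrow> real^3 \<Rightarrow> real^3" where
  "translation \<equiv> diag_isom False False False"

lemma vec3_nth [simp]: "vec3 a b c $ 1 = a" "vec3 a b c $ 2 = b" "vec3 a b c $ 3 = c"
  by (simp_all add: vec3_def)

lemma vec3_eq_iff: "(x::'a::zero^3) = y \<longleftrightarrow> x$1 = y$1 \<and> x$2 = y$2 \<and> x$3 = y$3"
  by (simp add: vec_eq_iff forall_3)

lemma vec3_inject [simp]: "vec3 a b c = vec3 a' b' c' \<longleftrightarrow> a = a' \<and> b = b' \<and> c = c'"
  by (simp add: vec3_eq_iff)

lemma flip_sign_simps [simp]:
  "flip_sign True = -1" "flip_sign False = 1" "flip_sign b * flip_sign b = 1"
  by (auto simp: flip_sign_def)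

lemma flip_sign_of_int: "flip_sign e * of_int k = of_int (if e then - k else k)"
  by (simp add: flip_sign_def)

lemma diag_isom_comp:
  "diag_isom e1 e2 e3 t1 t2 t3 \<circ> diag_isom f1 f2 f3 s1 s2 s3 =
   diag_isom (e1 \<noteq> f1) (e2 \<noteq> f2) (e3 \<noteq> f3)
     (flip_sign e1 * s1 + t1) (flip_sign e2 * s2 + t2) (flip_sign e3 * s3 + t3)"
  by (auto simp: fun_eq_iff diag_isom_def flip_sign_def algebra_simps)

lemma translation_zero: "translation 0 0 0 = id"
  by (simp add: fun_eq_iff diag_isom_def vec3_eq_iff)

lemma inv_diag_isom:
  "inv (diag_isom e1 e2 e3 t1 t2 t3) =
   diag_isom e1 e2 e3 (- flip_sign e1 * t1) (- flip_sign e2 * t2) (- flip_sign e3 * t3)"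
  by (rule inv_unique_comp)
    (simp_all add: diag_isom_comp translation_zero[symmetric] algebra_simps flip: mult.assoc)

lemma diag_isom_eq_iff:
  "diag_isom e1 e2 e3 t1 t2 t3 = diag_isom f1 f2 f3 s1 s2 s3 \<longleftrightarrow>
    e1 = f1 \<and> e2 = f2 \<and> e3 = f3 \<and> t1 = s1 \<and> t2 = s2 \<and> t3 = s3"
proof
  assume eq: "diag_isom e1 e2 e3 t1 t2 t3 = diag_isom f1 f2 f3 s1 s2 s3"
  from fun_cong[OF eq, of 0] have t: "t1 = s1" "t2 = s2" "t3 = s3"
    by (simp_all add: diag_isom_def)
  from fun_cong[OF eq, of "vec3 1 1 1"] t
  have "flip_sign e1 = flip_sign f1" "flip_sign e2 = flip_sign f2" "flip_sign e3 = flip_sign f3"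
    by (simp_all add: diag_isom_def)
  then show "e1 = f1 \<and> e2 = f2 \<and> e3 = f3 \<and> t1 = s1 \<and> t2 = s2 \<and> t3 = s3"
    using t by (auto simp: flip_sign_def split: if_splits)
qed simp

lemma det_diag_isom:
  "det (matrix (\<lambda>x. diag_isom e1 e2 e3 t1 t2 t3 x - diag_isom e1 e2 e3 t1 t2 t3 0))
     = flip_sign e1 * flip_sign e2 * flip_sign e3"
  by (simp add: det_3 matrix_def diag_isom_def axis_def)

lemma continuous_on_vec3 [continuous_intros]:
  assumes "continuous_on S f" "continuous_on S g" "continuous_on S h"
  shows "continuous_on S (\<lambda>x. vec3 (f x) (g x) (h x) :: real^3)"
proof -
  have vec3_eq: "(\<lambda>x. vec3 (f x) (g x) (h x) :: real^3) =
      (\<lambda>x. \<chi> i. if i = 1 then f x else if i = 2 then g x else h x)"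
    by (auto simp: fun_eq_iff vec3_eq_iff)
  have components: "continuous_on S (\<lambda>x. if i = 1 then f x else if i = 2 then g x else h x)" for i :: 3
    by (cases "i = 1"; cases "i = 2") (simp_all add: assms)
  show ?thesis
    unfolding vec3_eq by (rule continuous_on_vec_lambda) (rule components)
qed

lemma triangular_affine_homeomorphism:
  fixes g :: "real^3 \<Rightarrow> real^3"
  assumes g: "\<And>y. g y = vec3 (D1 * y$1 + o1) (P * y$1 + D2 * y$2 + o2) (Q * y$1 + R * y$2 + D3 * y$3 + o3)"
    and nonzero: "D1 \<noteq> 0" "D2 \<noteq> 0" "D3 \<noteq> 0"
  shows "\<exists>h. continuous_on UNIV g \<and> continuous_on UNIV h \<and> (\<forall>y. h (g y) = y) \<and> (\<forall>x. g (h x) = x)"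
proof -
  define h :: "real^3 \<Rightarrow> real^3" where
    "h x = vec3 ((x$1 - o1) / D1) ((x$2 - o2 - P * ((x$1 - o1) / D1)) / D2)
       ((x$3 - o3 - Q * ((x$1 - o1) / D1) - R * ((x$2 - o2 - P * ((x$1 - o1) / D1)) / D2)) / D3)" for x
  have "continuous_on UNIV g"
    unfolding g[abs_def] by (intro continuous_intros)
  moreover have "continuous_on UNIV h"
    unfolding h_def by (intro continuous_intros) (use nonzero in auto)
  moreover have "h (g y) = y" for y
    using nonzero by (simp add: g h_def vec3_eq_iff field_simps)
  moreover have "g (h x) = x" for x
    using nonzero by (simp add: g h_def vec3_eq_iff field_simps)
  ultimately show ?thesis
    by blast
qed

lemma homeomorphic_orbit_spaces_triangular:
  fixes g :: "real^3 \<Rightarrow> real^3"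
  assumes g: "\<And>y. g y = vec3 (D1 * y$1 + o1) (P * y$1 + D2 * y$2 + o2) (Q * y$1 + R * y$2 + D3 * y$3 + o3)"
    and nonzero: "D1 \<noteq> 0" "D2 \<noteq> 0" "D3 \<noteq> 0"
    and K_to_G: "\<And>\<gamma>. \<gamma> \<in> K \<Longrightarrow> \<exists>\<delta>\<in>G. \<forall>y. \<gamma> (g y) = g (\<delta> y)"
    and G_to_K: "\<And>\<delta>. \<delta> \<in> G \<Longrightarrow> \<exists>\<gamma>\<in>K. \<forall>y. \<gamma> (g y) = g (\<delta> y)"
  shows "orbit_space K homeomorphic_space orbit_space G"
proof -
  obtain h where homeo: "continuous_on UNIV g" "continuous_on UNIV h" "\<And>y. h (g y) = y" "\<And>x. g (h x) = x"
    using triangular_affine_homeomorphism[OF g nonzero] by blast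
  have "(g y, g y') \<in> orbit_rel K \<longleftrightarrow> (y, y') \<in> orbit_rel G" for y y'
  proof
    assume "(g y, g y') \<in> orbit_rel K"
    then obtain \<gamma> where "\<gamma> \<in> K" and \<gamma>: "\<gamma> (g y) = g y'"
      by (auto simp: orbit_rel_def)
    obtain \<delta> where "\<delta> \<in> G" and "\<forall>y. \<gamma> (g y) = g (\<delta> y)"
      using K_to_G[OF \<open>\<gamma> \<in> K\<close>] by blast
    with \<gamma> have "\<delta> y = y'"
      by (metis homeo(3))
    with \<open>\<delta> \<in> G\<close> show "(y, y') \<in> orbit_rel G"
      by (auto simp: orbit_rel_def)
  next
    assume "(y, y') \<in> orbit_rel G"
    then obtain \<delta> where "\<delta> \<in> G" and \<delta>: "\<delta> y = y'"
      by (auto simp: orbit_rel_def)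
    obtain \<gamma> where "\<gamma> \<in> K" and "\<forall>y. \<gamma> (g y) = g (\<delta> y)"
      using G_to_K[OF \<open>\<delta> \<in> G\<close>] by blast
    with \<delta> show "(g y, g y') \<in> orbit_rel K"
      by (auto simp: orbit_rel_def)
  qed
  then show ?thesis
    by (rule homeomorphic_orbit_spaces[OF homeo])
qed

section \<open>The three model groups\<close>

lemma gen_group_generator: "g \<in> S \<Longrightarrow> g \<in> gen_group S"
  by (metis gen_id gen_mult comp_id)

lemma gen_group_inv_generator: "g \<in> S \<Longrightarrow> inv g \<in> gen_group S"
  by (metis gen_id gen_inv comp_id)

lemma gen_group_comp: "f \<in> gen_group S \<Longrightarrow> g \<in> gen_group S \<Longrightarrow> f \<circ> g \<in> gen_group S"
  by (induction f rule: gen_group.induct) (simp_all add: comp_assoc gen_group.intros)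

lemma gen_group_subset:
  assumes "id \<in> E" "\<And>g. g \<in> S \<Longrightarrow> g \<in> E" "\<And>g. g \<in> S \<Longrightarrow> inv g \<in> E"
    and "\<And>f g. f \<in> E \<Longrightarrow> g \<in> E \<Longrightarrow> f \<circ> g \<in> E"
  shows "gen_group S \<subseteq> E"
proof
  fix f assume "f \<in> gen_group S"
  then show "f \<in> E"
    by induct (use assms in blast)+
qed

lemma translation_multiple_closed:
  assumes "id \<in> G" and comp: "\<And>f g. f \<in> G \<Longrightarrow> g \<in> G \<Longrightarrow> f \<circ> g \<in> G"
    and "translation v1 v2 v3 \<in> G" "translation (- v1) (- v2) (- v3) \<in> G"
  shows "translation (of_int n * v1) (of_int n * v2) (of_int n * v3) \<in> G"
proof (induction n rule: int_induct[where k = 0])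
  case base
  show ?case using assms(1) by (metis translation_zero mult_zero_left of_int_0)
next
  case (step1 i)
  have "translation (of_int (i + 1) * v1) (of_int (i + 1) * v2) (of_int (i + 1) * v3)
      = translation v1 v2 v3 \<circ> translation (of_int i * v1) (of_int i * v2) (of_int i * v3)"
    by (simp add: diag_isom_comp algebra_simps)
  then show ?case using comp[OF assms(3) step1(2)] by metis
next
  case (step2 i)
  have "translation (of_int (i - 1) * v1) (of_int (i - 1) * v2) (of_int (i - 1) * v3)
      = translation (- v1) (- v2) (- v3) \<circ> translation (of_int i * v1) (of_int i * v2) (of_int i * v3)"
    by (simp add: diag_isom_comp algebra_simps)
  then show ?case using comp[OF assms(4) step2(2)] by metis
qed

lemma translation_lattice_closed:
  assumes "id \<in> G" and comp: "\<And>f g. f \<in> G \<Longrightarrow> g \<in> G \<Longrightarrow> f \<circ> g \<in> G"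
    and "translation v1 0 0 \<in> G" "translation (- v1) 0 0 \<in> G"
    and "translation 0 v2 0 \<in> G" "translation 0 (- v2) 0 \<in> G"
    and "translation 0 0 v3 \<in> G" "translation 0 0 (- v3) \<in> G"
  shows "translation (of_int a * v1) (of_int b * v2) (of_int c * v3) \<in> G"
proof -
  have "translation (of_int a * v1) (of_int a * 0) (of_int a * 0) \<circ>
      translation (of_int b * 0) (of_int b * v2) (of_int b * 0) \<circ>
      translation (of_int c * 0) (of_int c * 0) (of_int c * v3) \<in> G"
    using assms by (intro comp translation_multiple_closed) simp_all
  then show ?thesis
    by (simp add: diag_isom_comp)
qed

definition torus_group :: "(real^3 \<Rightarrow> real^3) set" where
  "torus_group = {translation (of_int a) (of_int b) (of_int c) | a b c. True}"

lemma torus_groupI: "translation (of_int a) (of_int b) (of_int c) \<in> torus_group"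
  unfolding torus_group_def by blast

lemma torus_group_comp: "f \<in> torus_group \<Longrightarrow> g \<in> torus_group \<Longrightarrow> f \<circ> g \<in> torus_group"
  unfolding torus_group_def by (auto simp: diag_isom_comp) (metis of_int_add)

lemma torus3_generators:
  "{(\<lambda>x. x + vec3 1 0 0), (\<lambda>x. x + vec3 0 1 0), (\<lambda>x. x + vec3 0 0 1)} =
   {translation 1 0 0, translation 0 1 0, translation 0 0 1}"
  by (auto simp: fun_eq_iff diag_isom_def vec3_eq_iff)

lemma gen_group_torus_generators:
  "gen_group {translation 1 0 0, translation 0 1 0, translation 0 0 1} = torus_group"
  (is "gen_group ?S = _")
proof
  show "gen_group ?S \<subseteq> torus_group"
    using torus_groupI[of 0 0 0] torus_groupI[of 1 0 0] torus_groupI[of 0 1 0] torus_groupI[of 0 0 1]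
      torus_groupI[of "- 1" 0 0] torus_groupI[of 0 "- 1" 0] torus_groupI[of 0 0 "- 1"]
    by (intro gen_group_subset torus_group_comp) (auto simp: translation_zero inv_diag_isom)
  have "translation (- 1) 0 0 \<in> gen_group ?S" "translation 0 (- 1) 0 \<in> gen_group ?S"
      "translation 0 0 (- 1) \<in> gen_group ?S"
    using gen_group_inv_generator[of "translation 1 0 0" ?S] gen_group_inv_generator[of "translation 0 1 0" ?S]
      gen_group_inv_generator[of "translation 0 0 1" ?S]
    by (simp_all add: inv_diag_isom)
  then have "translation (of_int a * 1) (of_int b * 1) (of_int c * 1) \<in> gen_group ?S" for a b c
    by (intro translation_lattice_closed gen_id gen_group_comp) (simp_all add: gen_group_generator)
  then show "torus_group \<subseteq> gen_group ?S"
    unfolding torus_group_def by auto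
qed

lemma torus3_orbit_space: "torus3 = orbit_space torus_group"
  unfolding torus3_def torus3_generators gen_group_torus_generators ..

definition half_turn_group :: "(real^3 \<Rightarrow> real^3) set" where
  "half_turn_group = {diag_isom (odd c) (odd c) False (of_int a) (of_int b) (of_int c) | a b c. True}"

lemma half_turn_groupI: "diag_isom (odd c) (odd c) False (of_int a) (of_int b) (of_int c) \<in> half_turn_group"
  unfolding half_turn_group_def by blast

lemma half_turn_group_comp: "f \<in> half_turn_group \<Longrightarrow> g \<in> half_turn_group \<Longrightarrow> f \<circ> g \<in> half_turn_group"
proof -
  assume "f \<in> half_turn_group" "g \<in> half_turn_group"
  then obtain a b c a' b' c' where
    "f = diag_isom (odd c) (odd c) False (of_int a) (of_int b) (of_int c)"
    "g = diag_isom (odd c') (odd c') False (of_int a') (of_int b') (of_int c')"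
    unfolding half_turn_group_def by blast
  then show "f \<circ> g \<in> half_turn_group"
    using half_turn_groupI[of "c' + c" "(if odd c then - a' else a') + a" "(if odd c then - b' else b') + b"]
    by (cases "odd c") (simp_all add: diag_isom_comp flip_sign_of_int)
qed

lemma half_turn_generators:
  "{(\<lambda>x. x + vec3 1 0 0), (\<lambda>x. x + vec3 0 1 0), (\<lambda>x. vec3 (- x$1) (- x$2) (x$3 + 1))} =
   {translation 1 0 0, translation 0 1 0, diag_isom True True False 0 0 1}"
  by (auto simp: fun_eq_iff diag_isom_def vec3_eq_iff)

lemma gen_group_half_turn_generators:
  "gen_group {translation 1 0 0, translation 0 1 0, diag_isom True True False 0 0 1} = half_turn_group"
  (is "gen_group ?S = _")
proof
  show "gen_group ?S \<subseteq> half_turn_group"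
    using half_turn_groupI[of 0 0 0] half_turn_groupI[of 0 1 0] half_turn_groupI[of 0 0 1] half_turn_groupI[of 1 0 0]
      half_turn_groupI[of 0 "- 1" 0] half_turn_groupI[of 0 0 "- 1"] half_turn_groupI[of "- 1" 0 0]
    by (intro gen_group_subset half_turn_group_comp) (auto simp: translation_zero inv_diag_isom)
  let ?s = "diag_isom True True False 0 0 1"
  have inverses: "translation (- 1) 0 0 \<in> gen_group ?S" "translation 0 (- 1) 0 \<in> gen_group ?S"
    using gen_group_inv_generator[of "translation 1 0 0" ?S] gen_group_inv_generator[of "translation 0 1 0" ?S]
    by (simp_all add: inv_diag_isom)
  have vertical: "translation 0 0 2 \<in> gen_group ?S" "translation 0 0 (- 2) \<in> gen_group ?S"
    using gen_group_comp[OF gen_group_generator gen_group_generator, of ?s ?S ?s]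
      gen_group_comp[OF gen_group_inv_generator gen_group_inv_generator, of ?s ?S ?s]
    by (simp_all add: diag_isom_comp inv_diag_isom)
  have integer_translations: "translation (of_int a) (of_int b) (of_int (2 * j)) \<in> gen_group ?S" for a b j
    using translation_lattice_closed[of "gen_group ?S" 1 1 2 a b j] inverses vertical
    by (simp add: gen_id gen_group_comp gen_group_generator mult.commute)
  show "half_turn_group \<subseteq> gen_group ?S"
  proof
    fix f assume "f \<in> half_turn_group"
    then obtain a b c where f: "f = diag_isom (odd c) (odd c) False (of_int a) (of_int b) (of_int c)"
      unfolding half_turn_group_def by blast
    show "f \<in> gen_group ?S"
    proof (cases "odd c")
      case True
      then obtain j where "c = 2 * j + 1" by (rule oddE)
      then have "f = translation (of_int a) (of_int b) (of_int (2 * j)) \<circ> ?s"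
        using True by (simp add: f diag_isom_comp add.commute)
      then show ?thesis
        using gen_group_comp[OF integer_translations gen_group_generator[of ?s]] by simp
    next
      case False
      then obtain j where "c = 2 * j" by blast
      then show ?thesis
        using False integer_translations by (simp add: f)
    qed
  qed
qed

lemma half_turn_orbit_space: "half_turn_manifold = orbit_space half_turn_group"
  unfolding half_turn_manifold_def half_turn_generators gen_group_half_turn_generators ..

definition hw_param :: "bool \<Rightarrow> bool \<Rightarrow> bool \<Rightarrow> int \<Rightarrow> int \<Rightarrow> int \<Rightarrow> bool" where
  "hw_param e1 e2 e3 T1 T2 T3 \<longleftrightarrow> e3 = (e1 \<noteq> e2) \<and> odd T1 = e2 \<and> odd T2 = e3 \<and> odd T3 = e1"

definition hw_group :: "(real^3 \<Rightarrow> real^3) set" where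
  "hw_group = {diag_isom e1 e2 e3 (of_int T1 / 2) (of_int T2 / 2) (of_int T3 / 2) | e1 e2 e3 T1 T2 T3.
     hw_param e1 e2 e3 T1 T2 T3}"

lemma hw_groupI:
  "hw_param e1 e2 e3 T1 T2 T3 \<Longrightarrow> diag_isom e1 e2 e3 (of_int T1 / 2) (of_int T2 / 2) (of_int T3 / 2) \<in> hw_group"
  unfolding hw_group_def by blast

lemma flip_sign_half:
  "flip_sign e * (of_int T / 2) + of_int T' / 2 = of_int ((if e then - T else T) + T') / (2::real)"
  by (auto simp: flip_sign_def)

lemma hw_group_comp: "f \<in> hw_group \<Longrightarrow> g \<in> hw_group \<Longrightarrow> f \<circ> g \<in> hw_group"
proof -
  assume "f \<in> hw_group" "g \<in> hw_group"
  then obtain e1 e2 e3 T1 T2 T3 f1 f2 f3 S1 S2 S3 where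
    "hw_param e1 e2 e3 T1 T2 T3" "f = diag_isom e1 e2 e3 (of_int T1 / 2) (of_int T2 / 2) (of_int T3 / 2)"
    "hw_param f1 f2 f3 S1 S2 S3" "g = diag_isom f1 f2 f3 (of_int S1 / 2) (of_int S2 / 2) (of_int S3 / 2)"
    unfolding hw_group_def by blast
  then show "f \<circ> g \<in> hw_group"
    by (simp only: diag_isom_comp flip_sign_half) (intro hw_groupI, auto simp: hw_param_def)
qed

lemma hw_generators:
  "{(\<lambda>x. vec3 (x$1 + 1/2) (- x$2 + 1/2) (- x$3)),
    (\<lambda>x. vec3 (- x$1) (x$2 + 1/2) (- x$3 + 1/2)),
    (\<lambda>x. vec3 (- x$1 + 1/2) (- x$2) (x$3 + 1/2))} =
   {diag_isom False True True (1/2) (1/2) 0, diag_isom True False True 0 (1/2) (1/2),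
    diag_isom True True False (1/2) 0 (1/2)}"
  by (auto simp: fun_eq_iff diag_isom_def vec3_eq_iff)

lemma of_int_half: "(of_int T / 2 :: real) = of_int (T div 2) + (if odd T then 1 / 2 else 0)"
  by (cases "odd T") (auto elim!: oddE)

lemma gen_group_hw_generators:
  "gen_group {diag_isom False True True (1/2) (1/2) 0, diag_isom True False True 0 (1/2) (1/2),
     diag_isom True True False (1/2) 0 (1/2)} = hw_group"
  (is "gen_group {?A, ?B, ?C} = _")
proof
  show "gen_group {?A, ?B, ?C} \<subseteq> hw_group"
    using hw_groupI[of False False False 0 0 0] hw_groupI[of False True True 1 1 0] hw_groupI[of False True True "- 1" 1 0]
      hw_groupI[of True False True 0 1 1] hw_groupI[of True False True 0 "- 1" 1]
      hw_groupI[of True True False 1 0 1] hw_groupI[of True True False 1 0 "- 1"]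
    by (intro gen_group_subset hw_group_comp) (auto simp: hw_param_def translation_zero inv_diag_isom)
  have "translation 1 0 0 = ?A \<circ> ?A" "translation 0 1 0 = ?B \<circ> ?B" "translation 0 0 1 = ?C \<circ> ?C"
    "translation (- 1) 0 0 = inv ?A \<circ> inv ?A" "translation 0 (- 1) 0 = inv ?B \<circ> inv ?B"
    "translation 0 0 (- 1) = inv ?C \<circ> inv ?C"
    by (simp_all add: diag_isom_comp inv_diag_isom)
  then have integer_translations: "translation (of_int a) (of_int b) (of_int c) \<in> gen_group {?A, ?B, ?C}" for a b c
    using translation_lattice_closed[of "gen_group {?A, ?B, ?C}" 1 1 1 a b c]
    by (simp add: gen_id gen_group_comp gen_group_generator gen_group_inv_generator)
  show "hw_group \<subseteq> gen_group {?A, ?B, ?C}"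
  proof
    fix f assume "f \<in> hw_group"
    then obtain e1 e2 e3 T1 T2 T3 where param: "hw_param e1 e2 e3 T1 T2 T3"
      and f: "f = diag_isom e1 e2 e3 (of_int T1 / 2) (of_int T2 / 2) (of_int T3 / 2)"
      unfolding hw_group_def by blast
    let ?r = "diag_isom e1 e2 e3 (if odd T1 then 1 / 2 else 0) (if odd T2 then 1 / 2 else 0) (if odd T3 then 1 / 2 else 0)"
    have "f = translation (of_int (T1 div 2)) (of_int (T2 div 2)) (of_int (T3 div 2)) \<circ> ?r"
      unfolding f diag_isom_comp of_int_half by (simp add: add.commute)
    moreover have "?r \<in> gen_group {?A, ?B, ?C}"
      using param gen_id by (cases e1; cases e2) (auto simp: hw_param_def translation_zero gen_group_generator)
    ultimately show "f \<in> gen_group {?A, ?B, ?C}"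
      using gen_group_comp[OF integer_translations] by simp
  qed
qed

lemma hantzsche_wendt_orbit_space: "hantzsche_wendt = orbit_space hw_group"
  unfolding hantzsche_wendt_def hw_generators gen_group_hw_generators ..

section \<open>Groups of diagonal isometries described by parities\<close>

lemma int_subgroup_containing_2:
  fixes Q :: "int \<Rightarrow> bool"
  assumes diff: "\<And>a a' k. Q a \<Longrightarrow> Q a' \<Longrightarrow> Q (a - k * a')" and two: "Q 2"
  shows "\<exists>d>0. Q d \<and> (\<forall>a. Q a \<longrightarrow> d dvd a)"
proof (cases "Q 1")
  case True
  then show ?thesis by (intro exI[of _ 1]) auto
next
  case False
  have "even a" if "Q a" for a
  proof (rule ccontr)
    assume "odd a"
    then obtain j where "a = 2 * j + 1" using oddE by blast
    then have "Q 1" using diff[OF that two, of j] by simp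
    with False show False by simp
  qed
  then show ?thesis using two by (intro exI[of _ 2]) auto
qed

lemma lattice_triangular_basis:
  fixes N :: "int \<Rightarrow> int \<Rightarrow> int \<Rightarrow> bool"
  assumes add: "\<And>a b c a' b' c'. N a b c \<Longrightarrow> N a' b' c' \<Longrightarrow> N (a + a') (b + b') (c + c')"
    and scale: "\<And>k a b c. N a b c \<Longrightarrow> N (k * a) (k * b) (k * c)"
    and two: "N 2 0 0" "N 0 2 0" "N 0 0 2"
  obtains d1 p q d2 r d3 where "d1 > 0" "d2 > 0" "d3 > 0"
    "\<And>a b c. N a b c \<longleftrightarrow> (\<exists>k1 k2 k3. a = k1 * d1 \<and> b = k1 * p + k2 * d2 \<and> c = k1 * q + k2 * r + k3 * d3)"
proof -
  have diff: "N (a - k * a') (b - k * b') (c - k * c')" if "N a b c" "N a' b' c'" for a b c a' b' c' k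
    using add[OF that(1) scale[OF that(2), of "-k"]] by simp
  obtain d1 where d1: "d1 > 0" "\<exists>p q. N d1 p q" "\<And>a b c. N a b c \<Longrightarrow> d1 dvd a"
    using int_subgroup_containing_2[of "\<lambda>a. \<exists>b c. N a b c"] diff two(1) by blast
  then obtain p q where "N d1 p q" by blast
  obtain d2 where d2: "d2 > 0" "\<exists>r. N 0 d2 r" "\<And>b c. N 0 b c \<Longrightarrow> d2 dvd b"
    using int_subgroup_containing_2[of "\<lambda>b. \<exists>c. N 0 b c"] diff[where a=0 and a'=0] two(2)
    by fastforce
  then obtain r where "N 0 d2 r" by blast
  obtain d3 where d3: "d3 > 0" "N 0 0 d3" "\<And>c. N 0 0 c \<Longrightarrow> d3 dvd c"
    using int_subgroup_containing_2[of "\<lambda>c. N 0 0 c"] diff[where a=0 and a'=0 and b=0 and b'=0] two(3)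
    by fastforce
  have "N a b c \<longleftrightarrow> (\<exists>k1 k2 k3. a = k1 * d1 \<and> b = k1 * p + k2 * d2 \<and> c = k1 * q + k2 * r + k3 * d3)"
    for a b c
  proof
    assume N: "N a b c"
    obtain k1 where k1: "a = d1 * k1" using d1(3)[OF N] by (auto elim: dvdE)
    have N1: "N 0 (b - k1 * p) (c - k1 * q)"
      using diff[OF N \<open>N d1 p q\<close>, of k1] k1 by (simp add: mult.commute)
    obtain k2 where k2: "b - k1 * p = d2 * k2" using d2(3)[OF N1] by (auto elim: dvdE)
    have N2: "N 0 0 (c - k1 * q - k2 * r)"
      using diff[OF N1 \<open>N 0 d2 r\<close>, of k2] k2 by (simp add: mult.commute)
    obtain k3 where "c - k1 * q - k2 * r = d3 * k3" using d3(3)[OF N2] by (auto elim: dvdE)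
    with k1 k2 show "\<exists>k1 k2 k3. a = k1 * d1 \<and> b = k1 * p + k2 * d2 \<and> c = k1 * q + k2 * r + k3 * d3"
      by (intro exI[of _ k1] exI[of _ k2] exI[of _ k3]) (simp add: algebra_simps)
  next
    assume "\<exists>k1 k2 k3. a = k1 * d1 \<and> b = k1 * p + k2 * d2 \<and> c = k1 * q + k2 * r + k3 * d3"
    then obtain k1 k2 k3 where k: "a = k1 * d1" "b = k1 * p + k2 * d2" "c = k1 * q + k2 * r + k3 * d3"
      by blast
    have "N (k1 * d1 + k2 * 0 + k3 * 0) (k1 * p + k2 * d2 + k3 * 0) (k1 * q + k2 * r + k3 * d3)"
      by (intro add scale \<open>N d1 p q\<close> \<open>N 0 d2 r\<close> d3(2))
    then show "N a b c" using k by simp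
  qed
  with d1(1) d2(1) d3(1) that show ?thesis by blast
qed

text \<open>\<open>C e1 e2 e3 m1 m2 m3\<close> stands for \<open>diag_isom e1 e2 e3 (2 m1) (2 m2) (2 m3) \<in> \<Gamma>\<close>, where \<open>\<Gamma>\<close> is a
  subgroup of the reflection group of the cube containing its commutator subgroup, the translations
  by \<open>4\<int>\<^sup>3\<close>; hence membership only depends on the parities of the \<open>m\<^sub>i\<close>.\<close>

definition parity_group :: "(bool \<Rightarrow> bool \<Rightarrow> bool \<Rightarrow> int \<Rightarrow> int \<Rightarrow> int \<Rightarrow> bool) \<Rightarrow> (real^3 \<Rightarrow> real^3) set" where
  "parity_group C = {diag_isom e1 e2 e3 (2 * of_int m1) (2 * of_int m2) (2 * of_int m3)
     | e1 e2 e3 m1 m2 m3. C e1 e2 e3 m1 m2 m3}"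

lemma parity_groupI:
  "C e1 e2 e3 m1 m2 m3 \<Longrightarrow> diag_isom e1 e2 e3 (2 * of_int m1) (2 * of_int m2) (2 * of_int m3) \<in> parity_group C"
  unfolding parity_group_def by blast

lemma orbit_rel_parity_group: "(x, y) \<in> orbit_rel (parity_group C) \<longleftrightarrow>
  (\<exists>e1 e2 e3 m1 m2 m3. C e1 e2 e3 m1 m2 m3 \<and> y = diag_isom e1 e2 e3 (2 * of_int m1) (2 * of_int m2) (2 * of_int m3) x)"
  unfolding orbit_rel_def parity_group_def by blast

definition holonomy :: "(bool \<Rightarrow> bool \<Rightarrow> bool \<Rightarrow> int \<Rightarrow> int \<Rightarrow> int \<Rightarrow> bool) \<Rightarrow> (bool \<times> bool \<times> bool) set" where
  "holonomy C = {(e1, e2, e3). \<exists>m1 m2 m3. C e1 e2 e3 m1 m2 m3}"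

text \<open>An element of holonomy \<open>(T,T,F)\<close> is the half-turn about a vertical axis followed by the
  translation by \<open>2 m\<^sub>3\<close> along it. As \<open>\<Gamma>\<close> contains all translations by \<open>4\<int>\<^sup>3\<close>, oddness of \<open>m\<^sub>3\<close> for
  all such elements (and likewise for the other two axes) says exactly that \<open>\<Gamma>\<close> acts freely.\<close>

definition half_turns_are_screws :: "(bool \<Rightarrow> bool \<Rightarrow> bool \<Rightarrow> int \<Rightarrow> int \<Rightarrow> int \<Rightarrow> bool) \<Rightarrow> bool" where
  "half_turns_are_screws C \<longleftrightarrow> (\<forall>m1 m2 m3. (C True True False m1 m2 m3 \<longrightarrow> odd m3) \<and>
     (C True False True m1 m2 m3 \<longrightarrow> odd m2) \<and> (C False True True m1 m2 m3 \<longrightarrow> odd m1))"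

definition even_sign_changes :: "(bool \<times> bool \<times> bool) set" where
  "even_sign_changes = {(False, False, False), (True, True, False), (True, False, True), (False, True, True)}"

lemma subgroup_even_sign_changes_cases:
  fixes H :: "(bool \<times> bool \<times> bool) set"
  assumes "H \<subseteq> even_sign_changes"
    and "(False, False, False) \<in> H"
    and "\<And>a b c a' b' c'. (a, b, c) \<in> H \<Longrightarrow> (a', b', c') \<in> H \<Longrightarrow> (a \<noteq> a', b \<noteq> b', c \<noteq> c') \<in> H"
  shows "H = {(False, False, False)} \<or> H = {(False, False, False), (True, True, False)}
    \<or> H = {(False, False, False), (True, False, True)} \<or> H = {(False, False, False), (False, True, True)}
    \<or> H = even_sign_changes"
proof -
  have eq_iff: "H = S \<longleftrightarrow> (\<forall>x\<in>even_sign_changes. x \<in> H \<longleftrightarrow> x \<in> S)" if "S \<subseteq> even_sign_changes" for S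
    using that assms(1) by blast
  show ?thesis
    using assms(3)[of True True False True False True] assms(3)[of True True False False True True]
      assms(3)[of True False True False True True]
    by (cases "(True, True, False) \<in> H"; cases "(True, False, True) \<in> H"; cases "(False, True, True) \<in> H")
      (simp_all add: assms(2) eq_iff even_sign_changes_def)
qed

lemma homeomorphic_parity_group_swap13:
  "orbit_space (parity_group C) homeomorphic_space
     orbit_space (parity_group (\<lambda>e1 e2 e3 m1 m2 m3. C e3 e2 e1 m3 m2 m1))"
proof -
  define g :: "real^3 \<Rightarrow> real^3" where "g y = vec3 (y$3) (y$2) (y$1)" for y
  have g_involution: "g (g y) = y" for y
    by (simp add: g_def vec3_eq_iff)
  have cont: "continuous_on UNIV g"
    unfolding g_def by (intro continuous_intros)
  have rel: "(g y, g y') \<in> orbit_rel (parity_group C) \<longleftrightarrow>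
      (y, y') \<in> orbit_rel (parity_group (\<lambda>e1 e2 e3 m1 m2 m3. C e3 e2 e1 m3 m2 m1))" for y y'
  proof -
    have "g y' = diag_isom e1 e2 e3 t1 t2 t3 (g y) \<longleftrightarrow> y' = diag_isom e3 e2 e1 t3 t2 t1 y"
      for e1 e2 e3 t1 t2 t3
      by (auto simp: g_def diag_isom_def vec3_eq_iff)
    then show ?thesis
      unfolding orbit_rel_parity_group by blast
  qed
  show ?thesis
    by (rule homeomorphic_orbit_spaces[OF cont cont g_involution g_involution rel])
qed

lemma homeomorphic_parity_group_swap23:
  "orbit_space (parity_group C) homeomorphic_space
     orbit_space (parity_group (\<lambda>e1 e2 e3 m1 m2 m3. C e1 e3 e2 m1 m3 m2))"
proof -
  define g :: "real^3 \<Rightarrow> real^3" where "g y = vec3 (y$1) (y$3) (y$2)" for y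
  have g_involution: "g (g y) = y" for y
    by (simp add: g_def vec3_eq_iff)
  have cont: "continuous_on UNIV g"
    unfolding g_def by (intro continuous_intros)
  have rel: "(g y, g y') \<in> orbit_rel (parity_group C) \<longleftrightarrow>
      (y, y') \<in> orbit_rel (parity_group (\<lambda>e1 e2 e3 m1 m2 m3. C e1 e3 e2 m1 m3 m2))" for y y'
  proof -
    have "g y' = diag_isom e1 e2 e3 t1 t2 t3 (g y) \<longleftrightarrow> y' = diag_isom e1 e3 e2 t1 t3 t2 y"
      for e1 e2 e3 t1 t2 t3
      by (auto simp: g_def diag_isom_def vec3_eq_iff)
    then show ?thesis
      unfolding orbit_rel_parity_group by blast
  qed
  show ?thesis
    by (rule homeomorphic_orbit_spaces[OF cont cont g_involution g_involution rel])
qed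

lemma holonomy_swap13:
  "holonomy (\<lambda>e1 e2 e3 m1 m2 m3. C e3 e2 e1 m3 m2 m1) = (\<lambda>(a, b, c). (c, b, a)) ` holonomy C"
  unfolding holonomy_def by (auto simp: image_iff) blast

lemma holonomy_swap23:
  "holonomy (\<lambda>e1 e2 e3 m1 m2 m3. C e1 e3 e2 m1 m3 m2) = (\<lambda>(a, b, c). (a, c, b)) ` holonomy C"
  unfolding holonomy_def by (auto simp: image_iff) blast

locale parity_subgroup =
  fixes C :: "bool \<Rightarrow> bool \<Rightarrow> bool \<Rightarrow> int \<Rightarrow> int \<Rightarrow> int \<Rightarrow> bool"
  assumes C_add: "\<And>e1 e2 e3 m1 m2 m3 f1 f2 f3 n1 n2 n3. C e1 e2 e3 m1 m2 m3 \<Longrightarrow> C f1 f2 f3 n1 n2 n3 \<Longrightarrow>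
      C (e1 \<noteq> f1) (e2 \<noteq> f2) (e3 \<noteq> f3) (m1 + n1) (m2 + n2) (m3 + n3)"
    and C_parity: "\<And>e1 e2 e3 m1 m2 m3 n1 n2 n3. odd m1 = odd n1 \<Longrightarrow> odd m2 = odd n2 \<Longrightarrow> odd m3 = odd n3 \<Longrightarrow>
      C e1 e2 e3 m1 m2 m3 = C e1 e2 e3 n1 n2 n3"
    and C_zero: "C False False False 0 0 0"
begin

lemma holonomyI: "C e1 e2 e3 m1 m2 m3 \<Longrightarrow> (e1, e2, e3) \<in> holonomy C"
  unfolding holonomy_def by blast

lemma C_neg: "C e1 e2 e3 m1 m2 m3 \<Longrightarrow> C e1 e2 e3 (- m1) (- m2) (- m3)"
  using C_parity[of m1 "- m1" m2 "- m2" m3 "- m3" e1 e2 e3] by simp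

lemma C_diff: "C e1 e2 e3 m1 m2 m3 \<Longrightarrow> C f1 f2 f3 n1 n2 n3 \<Longrightarrow>
    C (e1 \<noteq> f1) (e2 \<noteq> f2) (e3 \<noteq> f3) (m1 - n1) (m2 - n2) (m3 - n3)"
  using C_add[OF _ C_neg[of f1 f2 f3 n1 n2 n3]] by simp

lemma C_coset:
  assumes "C f1 f2 f3 n1 n2 n3"
  shows "C (e1 \<noteq> f1) (e2 \<noteq> f2) (e3 \<noteq> f3) (m1 + n1) (m2 + n2) (m3 + n3) \<longleftrightarrow> C e1 e2 e3 m1 m2 m3"
proof
  assume "C (e1 \<noteq> f1) (e2 \<noteq> f2) (e3 \<noteq> f3) (m1 + n1) (m2 + n2) (m3 + n3)"
  from C_diff[OF this assms] show "C e1 e2 e3 m1 m2 m3"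
    by (cases f1; cases f2; cases f3) simp_all
qed (rule C_add[OF _ assms])

lemma C_even: "even a \<Longrightarrow> even b \<Longrightarrow> even c \<Longrightarrow> C False False False a b c"
  using C_zero C_parity[of a 0 b 0 c 0] by simp

lemma C_scale:
  assumes "C False False False a b c"
  shows "C False False False (k * a) (k * b) (k * c)"
proof (cases "odd k")
  case True
  then show ?thesis using assms C_parity[of "k * a" a "k * b" b "k * c" c] by simp
next
  case False
  then show ?thesis by (simp add: C_even)
qed

lemma C_translations_same_parity:
  assumes "C e1 e2 e3 n1 n2 n3"
    and translations_even: "\<And>a b c. C False False False a b c \<Longrightarrow> even a \<and> even b \<and> even c"
  shows "C e1 e2 e3 m1 m2 m3 \<longleftrightarrow> odd m1 = odd n1 \<and> odd m2 = odd n2 \<and> odd m3 = odd n3"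
proof
  assume "C e1 e2 e3 m1 m2 m3"
  from translations_even[OF C_diff[OF this assms(1), simplified]]
  show "odd m1 = odd n1 \<and> odd m2 = odd n2 \<and> odd m3 = odd n3" by auto
next
  assume "odd m1 = odd n1 \<and> odd m2 = odd n2 \<and> odd m3 = odd n3"
  then show "C e1 e2 e3 m1 m2 m3"
    using assms(1) C_parity[of m1 n1 m2 n2 m3 n3 e1 e2 e3] by simp
qed

lemma translation_lattice:
  obtains d1 d2 d3 p q r where "d1 > 0" "d2 > 0" "d3 > 0"
    "\<And>a b c. C False False False a b c \<longleftrightarrow>
       (\<exists>k1 k2 k3. a = k1 * d1 \<and> b = k1 * p + k2 * d2 \<and> c = k1 * q + k2 * r + k3 * d3)"
proof (rule lattice_triangular_basis[of "C False False False"])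
  show "C False False False (a + a') (b + b') (c + c')"
    if "C False False False a b c" "C False False False a' b' c'" for a b c a' b' c'
    using C_add[OF that] by simp
qed (simp_all add: C_scale C_even that)

lemma translation_lattice_plane:
  obtains d1 d2 p where "d1 > 0" "d2 > 0"
    "\<And>a b. C False False False a b 0 \<longleftrightarrow> (\<exists>k1 k2. a = k1 * d1 \<and> b = k1 * p + k2 * d2)"
proof -
  obtain d1 p q d2 r d3 where "d1 > 0" "d2 > 0"
    and N: "\<And>a b c. C False False False a b 0 \<longleftrightarrow>
       (\<exists>k1 k2 k3. a = k1 * d1 \<and> b = k1 * p + k2 * d2 \<and> c = k1 * q + k2 * r + k3 * d3)"
  proof (rule lattice_triangular_basis[of "\<lambda>a b c. C False False False a b 0"])
    show "C False False False (a + a') (b + b') 0"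
      if "C False False False a b 0" "C False False False a' b' 0" for a b a' b'
      using C_add[OF that] by simp
    show "C False False False (k * a) (k * b) 0" if "C False False False a b 0" for k a b
      using C_scale[OF that, of k] by simp
  qed (simp_all add: C_even, blast)
  have "C False False False a b 0 \<longleftrightarrow> (\<exists>k1 k2. a = k1 * d1 \<and> b = k1 * p + k2 * d2)" for a b
    using N[of a b] N[of a b 0] by (metis add_0_right mult_zero_right)
  with \<open>d1 > 0\<close> \<open>d2 > 0\<close> that show ?thesis by blast
qed

lemma holonomy_cases:
  assumes "holonomy C \<subseteq> even_sign_changes"
  shows "holonomy C = {(False, False, False)} \<or> holonomy C = {(False, False, False), (True, True, False)}
    \<or> holonomy C = {(False, False, False), (True, False, True)}
    \<or> holonomy C = {(False, False, False), (False, True, True)} \<or> holonomy C = even_sign_changes"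
proof (rule subgroup_even_sign_changes_cases[OF assms])
  show "(False, False, False) \<in> holonomy C"
    using holonomyI[OF C_zero] .
  show "(a \<noteq> a', b \<noteq> b', c \<noteq> c') \<in> holonomy C"
    if hol: "(a, b, c) \<in> holonomy C" "(a', b', c') \<in> holonomy C" for a b c a' b' c'
  proof -
    obtain m1 m2 m3 n1 n2 n3 where "C a b c m1 m2 m3" "C a' b' c' n1 n2 n3"
      using hol unfolding holonomy_def by blast
    from holonomyI[OF C_add[OF this]] show ?thesis .
  qed
qed

lemma homeomorphic_torus3:
  assumes "holonomy C \<subseteq> {(False, False, False)}"
  shows "orbit_space (parity_group C) homeomorphic_space torus3"
proof -
  have no_flip: "C e1 e2 e3 m1 m2 m3 \<Longrightarrow> \<not> e1 \<and> \<not> e2 \<and> \<not> e3" for e1 e2 e3 m1 m2 m3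
    using assms holonomyI[of e1 e2 e3 m1 m2 m3] by auto
  obtain d1 d2 d3 p q r where "d1 > 0" "d2 > 0" "d3 > 0"
    and lattice: "\<And>a b c. C False False False a b c \<longleftrightarrow>
       (\<exists>k1 k2 k3. a = k1 * d1 \<and> b = k1 * p + k2 * d2 \<and> c = k1 * q + k2 * r + k3 * d3)"
    by (rule translation_lattice) blast
  define g :: "real^3 \<Rightarrow> real^3" where
    "g y = vec3 (2 * d1 * y$1) (2 * p * y$1 + 2 * d2 * y$2) (2 * q * y$1 + 2 * r * y$2 + 2 * d3 * y$3)" for y
  show ?thesis
    unfolding torus3_orbit_space
  proof (rule homeomorphic_orbit_spaces_triangular[of g "2 * d1" 0 "2 * p" "2 * d2" 0 "2 * q" "2 * r" "2 * d3" 0])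
    fix \<gamma> assume "\<gamma> \<in> parity_group C"
    then obtain e1 e2 e3 m1 m2 m3 where C: "C e1 e2 e3 m1 m2 m3"
      and \<gamma>: "\<gamma> = diag_isom e1 e2 e3 (2 * of_int m1) (2 * of_int m2) (2 * of_int m3)"
      unfolding parity_group_def by blast
    have "C False False False m1 m2 m3"
      using C no_flip[OF C] by simp
    then obtain k1 k2 k3 where "m1 = k1 * d1" "m2 = k1 * p + k2 * d2" "m3 = k1 * q + k2 * r + k3 * d3"
      unfolding lattice by blast
    then have "\<gamma> (g y) = g (translation (of_int k1) (of_int k2) (of_int k3) y)" for y
      using no_flip[OF C] by (simp add: \<gamma> g_def diag_isom_def algebra_simps)
    then show "\<exists>\<delta>\<in>torus_group. \<forall>y. \<gamma> (g y) = g (\<delta> y)"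
      using torus_groupI by blast
  next
    fix \<delta> assume "\<delta> \<in> torus_group"
    then obtain a b c where \<delta>: "\<delta> = translation (of_int a) (of_int b) (of_int c)"
      unfolding torus_group_def by blast
    have "C False False False (a * d1) (a * p + b * d2) (a * q + b * r + c * d3)"
      unfolding lattice by (auto simp: algebra_simps)
    moreover have "translation (2 * of_int (a * d1)) (2 * of_int (a * p + b * d2))
        (2 * of_int (a * q + b * r + c * d3)) (g y) = g (\<delta> y)" for y
      by (simp add: \<delta> g_def diag_isom_def algebra_simps)
    ultimately show "\<exists>\<gamma>\<in>parity_group C. \<forall>y. \<gamma> (g y) = g (\<delta> y)"
      using parity_groupI[of C] by blast
  qed (use \<open>d1 > 0\<close> \<open>d2 > 0\<close> \<open>d3 > 0\<close> in \<open>simp_all add: g_def\<close>)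
qed

lemma half_turn_normal_form:
  assumes hol: "holonomy C = {(False, False, False), (True, True, False)}"
    and "half_turns_are_screws C"
  obtains d1 d2 a0 b0 p where "d1 > 0" "d2 > 0"
    "\<forall>e1 e2 e3 m1 m2 m3. C e1 e2 e3 m1 m2 m3 \<longleftrightarrow> e1 = odd m3 \<and> e2 = odd m3 \<and> \<not> e3 \<and>
       (\<exists>k1 k2. m1 = (if odd m3 then a0 else 0) + k1 * d1 \<and> m2 = (if odd m3 then b0 else 0) + k1 * p + k2 * d2)"
proof -
  have screw: "\<And>m1 m2 m3. C True True False m1 m2 m3 \<Longrightarrow> odd m3"
    using assms(2) unfolding half_turns_are_screws_def by blast
  have "(True, True, False) \<in> holonomy C"
    using hol by simp
  then obtain a0 b0 c0 where m0: "C True True False a0 b0 c0"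
    unfolding holonomy_def by blast
  have "odd c0" using screw[OF m0] .
  obtain d1 d2 p where "d1 > 0" "d2 > 0"
    and plane: "\<And>a b. C False False False a b 0 \<longleftrightarrow> (\<exists>k1 k2. a = k1 * d1 \<and> b = k1 * p + k2 * d2)"
    by (rule translation_lattice_plane) blast
  have flat: "e1 = e2 \<and> \<not> e3" if "C e1 e2 e3 m1 m2 m3" for e1 e2 e3 m1 m2 m3
    using holonomyI[OF that] hol by auto
  have translations_even: "even c" if "C False False False a b c" for a b c
  proof -
    have "odd (c0 + c)"
      using screw[OF C_add[OF m0 that, simplified]] .
    with \<open>odd c0\<close> show ?thesis by simp
  qed
  have F: "C False False False m1 m2 m3 \<longleftrightarrow> even m3 \<and> (\<exists>k1 k2. m1 = k1 * d1 \<and> m2 = k1 * p + k2 * d2)"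
    for m1 m2 m3
  proof -
    have "C False False False m1 m2 m3 \<longleftrightarrow> even m3 \<and> C False False False m1 m2 0"
      using translations_even C_parity[of m1 m1 m2 m2 m3 0 False False False] by blast
    then show ?thesis by (simp only: plane)
  qed
  have T: "C True True False m1 m2 m3 \<longleftrightarrow> odd m3 \<and> (\<exists>k1 k2. m1 = a0 + k1 * d1 \<and> m2 = b0 + k1 * p + k2 * d2)"
    for m1 m2 m3
  proof -
    have "C True True False m1 m2 m3 \<longleftrightarrow> C False False False (m1 - a0) (m2 - b0) (m3 - c0)"
      using C_coset[OF m0, of False False False "m1 - a0" "m2 - b0" "m3 - c0"] by simp
    moreover have "m1 - a0 = k1 * d1 \<longleftrightarrow> m1 = a0 + k1 * d1" "m2 - b0 = k1 * p + k2 * d2 \<longleftrightarrow> m2 = b0 + k1 * p + k2 * d2"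
      for k1 k2
      by auto
    ultimately show ?thesis
      unfolding F using \<open>odd c0\<close> by simp
  qed
  show ?thesis
  proof (rule that[OF \<open>d1 > 0\<close> \<open>d2 > 0\<close>], intro allI)
    show "C e1 e2 e3 m1 m2 m3 \<longleftrightarrow> e1 = odd m3 \<and> e2 = odd m3 \<and> \<not> e3 \<and>
       (\<exists>k1 k2. m1 = (if odd m3 then a0 else 0) + k1 * d1 \<and> m2 = (if odd m3 then b0 else 0) + k1 * p + k2 * d2)"
      for e1 e2 e3 m1 m2 m3
      using flat[of e1 e2 e3 m1 m2 m3] by (cases e1; cases e2; cases e3) (auto simp: F T)
  qed
qed

lemma homeomorphic_half_turn:
  assumes "holonomy C = {(False, False, False), (True, True, False)}"
    and "half_turns_are_screws C"
  shows "orbit_space (parity_group C) homeomorphic_space half_turn_manifold"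
proof -
  obtain d1 d2 a0 b0 p where "d1 > 0" "d2 > 0" and normal_form:
    "\<forall>e1 e2 e3 m1 m2 m3. C e1 e2 e3 m1 m2 m3 \<longleftrightarrow> e1 = odd m3 \<and> e2 = odd m3 \<and> \<not> e3 \<and>
       (\<exists>k1 k2. m1 = (if odd m3 then a0 else 0) + k1 * d1 \<and> m2 = (if odd m3 then b0 else 0) + k1 * p + k2 * d2)"
    using assms by (rule half_turn_normal_form)
  note normal_form = normal_form[rule_format]
  define g :: "real^3 \<Rightarrow> real^3" where
    "g y = vec3 (2 * d1 * y$1 + a0) (2 * p * y$1 + 2 * d2 * y$2 + b0) (2 * y$3)" for y
  show ?thesis
    unfolding half_turn_orbit_space
  proof (rule homeomorphic_orbit_spaces_triangular[of g "2 * d1" a0 "2 * p" "2 * d2" b0 0 0 2 0])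
    fix \<gamma> assume "\<gamma> \<in> parity_group C"
    then obtain e1 e2 e3 m1 m2 m3 where C: "C e1 e2 e3 m1 m2 m3"
      and \<gamma>: "\<gamma> = diag_isom e1 e2 e3 (2 * of_int m1) (2 * of_int m2) (2 * of_int m3)"
      unfolding parity_group_def by blast
    then obtain k1 k2 where "e1 = odd m3" "e2 = odd m3" "\<not> e3"
      "m1 = (if odd m3 then a0 else 0) + k1 * d1" "m2 = (if odd m3 then b0 else 0) + k1 * p + k2 * d2"
      unfolding normal_form by blast
    then have "\<gamma> (g y) = g (diag_isom (odd m3) (odd m3) False (of_int k1) (of_int k2) (of_int m3) y)" for y
      by (cases "odd m3") (simp_all add: \<gamma> g_def diag_isom_def algebra_simps)
    then show "\<exists>\<delta>\<in>half_turn_group. \<forall>y. \<gamma> (g y) = g (\<delta> y)"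
      using half_turn_groupI[of m3 k1 k2] by blast
  next
    fix \<delta> assume "\<delta> \<in> half_turn_group"
    then obtain a b c where \<delta>: "\<delta> = diag_isom (odd c) (odd c) False (of_int a) (of_int b) (of_int c)"
      unfolding half_turn_group_def by blast
    have "C (odd c) (odd c) False ((if odd c then a0 else 0) + a * d1) ((if odd c then b0 else 0) + a * p + b * d2) c"
      unfolding normal_form by (auto simp: algebra_simps)
    note parity_groupI[of C, OF this]
    moreover have "diag_isom (odd c) (odd c) False (2 * of_int ((if odd c then a0 else 0) + a * d1))
        (2 * of_int ((if odd c then b0 else 0) + a * p + b * d2)) (2 * of_int c) (g y) = g (\<delta> y)" for y
      by (cases "odd c") (simp_all add: \<delta> g_def diag_isom_def algebra_simps)
    ultimately show "\<exists>\<gamma>\<in>parity_group C. \<forall>y. \<gamma> (g y) = g (\<delta> y)"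
      using parity_groupI[of C] by blast
  qed (use \<open>d1 > 0\<close> \<open>d2 > 0\<close> in \<open>simp_all add: g_def\<close>)
qed

lemma parity_subgroup_swap13: "parity_subgroup (\<lambda>e1 e2 e3 m1 m2 m3. C e3 e2 e1 m3 m2 m1)"
proof
  show "C (e3 \<noteq> f3) (e2 \<noteq> f2) (e1 \<noteq> f1) (m3 + n3) (m2 + n2) (m1 + n1)"
    if "C e3 e2 e1 m3 m2 m1" "C f3 f2 f1 n3 n2 n1" for e1 e2 e3 m1 m2 m3 f1 f2 f3 n1 n2 n3
    using C_add[OF that] .
  show "C e3 e2 e1 m3 m2 m1 = C e3 e2 e1 n3 n2 n1"
    if "odd m1 = odd n1" "odd m2 = odd n2" "odd m3 = odd n3" for e1 e2 e3 m1 m2 m3 n1 n2 n3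
    using that by (intro C_parity)
qed (rule C_zero)

lemma parity_subgroup_swap23: "parity_subgroup (\<lambda>e1 e2 e3 m1 m2 m3. C e1 e3 e2 m1 m3 m2)"
proof
  show "C (e1 \<noteq> f1) (e3 \<noteq> f3) (e2 \<noteq> f2) (m1 + n1) (m3 + n3) (m2 + n2)"
    if "C e1 e3 e2 m1 m3 m2" "C f1 f3 f2 n1 n3 n2" for e1 e2 e3 m1 m2 m3 f1 f2 f3 n1 n2 n3
    using C_add[OF that] .
  show "C e1 e3 e2 m1 m3 m2 = C e1 e3 e2 n1 n3 n2"
    if "odd m1 = odd n1" "odd m2 = odd n2" "odd m3 = odd n3" for e1 e2 e3 m1 m2 m3 n1 n2 n3
    using that by (intro C_parity)
qed (rule C_zero)

lemma homeomorphic_half_turn_axis1: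
  assumes "holonomy C = {(False, False, False), (False, True, True)}"
    and "half_turns_are_screws C"
  shows "orbit_space (parity_group C) homeomorphic_space half_turn_manifold"
proof -
  interpret swapped: parity_subgroup "\<lambda>e1 e2 e3 m1 m2 m3. C e3 e2 e1 m3 m2 m1"
    by (rule parity_subgroup_swap13)
  have "holonomy (\<lambda>e1 e2 e3 m1 m2 m3. C e3 e2 e1 m3 m2 m1) = {(False, False, False), (True, True, False)}"
    by (subst holonomy_swap13) (simp add: assms(1))
  moreover have "half_turns_are_screws (\<lambda>e1 e2 e3 m1 m2 m3. C e3 e2 e1 m3 m2 m1)"
    using assms(2) unfolding half_turns_are_screws_def by blast
  ultimately have "orbit_space (parity_group (\<lambda>e1 e2 e3 m1 m2 m3. C e3 e2 e1 m3 m2 m1)) homeomorphic_space half_turn_manifold"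
    by (rule swapped.homeomorphic_half_turn)
  then show ?thesis
    by (rule homeomorphic_space_trans[OF homeomorphic_parity_group_swap13])
qed

lemma homeomorphic_half_turn_axis2:
  assumes "holonomy C = {(False, False, False), (True, False, True)}"
    and "half_turns_are_screws C"
  shows "orbit_space (parity_group C) homeomorphic_space half_turn_manifold"
proof -
  interpret swapped: parity_subgroup "\<lambda>e1 e2 e3 m1 m2 m3. C e1 e3 e2 m1 m3 m2"
    by (rule parity_subgroup_swap23)
  have "holonomy (\<lambda>e1 e2 e3 m1 m2 m3. C e1 e3 e2 m1 m3 m2) = {(False, False, False), (True, True, False)}"
    by (subst holonomy_swap23) (simp add: assms(1))
  moreover have "half_turns_are_screws (\<lambda>e1 e2 e3 m1 m2 m3. C e1 e3 e2 m1 m3 m2)"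
    using assms(2) unfolding half_turns_are_screws_def by blast
  ultimately have "orbit_space (parity_group (\<lambda>e1 e2 e3 m1 m2 m3. C e1 e3 e2 m1 m3 m2)) homeomorphic_space half_turn_manifold"
    by (rule swapped.homeomorphic_half_turn)
  then show ?thesis
    by (rule homeomorphic_space_trans[OF homeomorphic_parity_group_swap23])
qed

lemma hantzsche_wendt_normal_form:
  assumes hol: "holonomy C = even_sign_changes" and "half_turns_are_screws C"
  obtains o1 o2 o3 where "\<forall>e1 e2 e3 m1 m2 m3. C e1 e2 e3 m1 m2 m3 \<longleftrightarrow>
    hw_param e1 e2 e3 (m1 - (if e1 then o1 else 0)) (m2 - (if e2 then o2 else 0)) (m3 - (if e3 then o3 else 0))"
proof -
  have screw: "\<And>m1 m2 m3. C True True False m1 m2 m3 \<Longrightarrow> odd m3"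
      "\<And>m1 m2 m3. C True False True m1 m2 m3 \<Longrightarrow> odd m2"
      "\<And>m1 m2 m3. C False True True m1 m2 m3 \<Longrightarrow> odd m1"
    using assms(2) unfolding half_turns_are_screws_def by blast+
  have "(False, True, True) \<in> holonomy C" "(True, False, True) \<in> holonomy C"
    using hol by (simp_all add: even_sign_changes_def)
  then obtain a1 p q r b2 s where FTT: "C False True True a1 p q" and TFT: "C True False True r b2 s"
    unfolding holonomy_def by blast
  have TTF: "C True True False (a1 + r) (p + b2) (q + s)"
    using C_add[OF FTT TFT] by simp
  have "odd a1" "odd b2" "odd (q + s)"
    using screw(3)[OF FTT] screw(2)[OF TFT] screw(1)[OF TTF] .
  have translations_even: "even a \<and> even b \<and> even c" if "C False False False a b c" for a b c
    using screw(3)[OF C_add[OF FTT that, simplified]] screw(2)[OF C_add[OF TFT that, simplified]]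
      screw(1)[OF C_add[OF TTF that, simplified]] \<open>odd a1\<close> \<open>odd b2\<close> \<open>odd (q + s)\<close> by simp
  note same_parity = C_translations_same_parity[OF _ translations_even]
  have orientation: "e3 = (e1 \<noteq> e2)" if "C e1 e2 e3 m1 m2 m3" for e1 e2 e3 m1 m2 m3
    using holonomyI[OF that] hol by (auto simp: even_sign_changes_def)
  show ?thesis
  \<comment> \<open>the shifts are read off from the reference elements \<open>FTT\<close> and \<open>TFT\<close>\<close>
  proof (rule that[of r "p + 1" q], intro allI)
    fix e1 e2 e3 m1 m2 m3
    show "C e1 e2 e3 m1 m2 m3 \<longleftrightarrow> hw_param e1 e2 e3 (m1 - (if e1 then r else 0))
      (m2 - (if e2 then p + 1 else 0)) (m3 - (if e3 then q else 0))"
      using orientation[of e1 e2 e3 m1 m2 m3] same_parity[OF C_zero] same_parity[OF FTT]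
        same_parity[OF TFT] same_parity[OF TTF] \<open>odd a1\<close> \<open>odd b2\<close> \<open>odd (q + s)\<close>
      by (cases e1; cases e2; cases e3) (auto simp: hw_param_def)
  qed
qed

lemma homeomorphic_hantzsche_wendt:
  assumes "holonomy C = even_sign_changes" and "half_turns_are_screws C"
  shows "orbit_space (parity_group C) homeomorphic_space hantzsche_wendt"
proof -
  obtain o1 o2 o3 where normal_form: "\<forall>e1 e2 e3 m1 m2 m3. C e1 e2 e3 m1 m2 m3 \<longleftrightarrow>
    hw_param e1 e2 e3 (m1 - (if e1 then o1 else 0)) (m2 - (if e2 then o2 else 0)) (m3 - (if e3 then o3 else 0))"
    using assms by (rule hantzsche_wendt_normal_form)
  define g :: "real^3 \<Rightarrow> real^3" where "g y = vec3 (4 * y$1 + o1) (4 * y$2 + o2) (4 * y$3 + o3)" for y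
  have conj: "diag_isom e1 e2 e3 (2 * of_int m1) (2 * of_int m2) (2 * of_int m3) (g y) =
      g (diag_isom e1 e2 e3 (of_int (m1 - (if e1 then o1 else 0)) / 2) (of_int (m2 - (if e2 then o2 else 0)) / 2)
        (of_int (m3 - (if e3 then o3 else 0)) / 2) y)" for e1 e2 e3 m1 m2 m3 y
    by (cases e1; cases e2; cases e3) (simp_all add: g_def diag_isom_def field_simps)
  show ?thesis
    unfolding hantzsche_wendt_orbit_space
  proof (rule homeomorphic_orbit_spaces_triangular[of g 4 o1 0 4 o2 0 0 4 o3])
    fix \<gamma> assume "\<gamma> \<in> parity_group C"
    then obtain e1 e2 e3 m1 m2 m3 where "C e1 e2 e3 m1 m2 m3"
      and \<gamma>: "\<gamma> = diag_isom e1 e2 e3 (2 * of_int m1) (2 * of_int m2) (2 * of_int m3)"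
      unfolding parity_group_def by blast
    then have "diag_isom e1 e2 e3 (of_int (m1 - (if e1 then o1 else 0)) / 2) (of_int (m2 - (if e2 then o2 else 0)) / 2)
        (of_int (m3 - (if e3 then o3 else 0)) / 2) \<in> hw_group"
      using normal_form by (intro hw_groupI) simp
    with conj show "\<exists>\<delta>\<in>hw_group. \<forall>y. \<gamma> (g y) = g (\<delta> y)"
      unfolding \<gamma> by blast
  next
    fix \<delta> assume "\<delta> \<in> hw_group"
    then obtain e1 e2 e3 T1 T2 T3 where "hw_param e1 e2 e3 T1 T2 T3"
      and \<delta>: "\<delta> = diag_isom e1 e2 e3 (of_int T1 / 2) (of_int T2 / 2) (of_int T3 / 2)"
      unfolding hw_group_def by blast
    then have "C e1 e2 e3 (T1 + (if e1 then o1 else 0)) (T2 + (if e2 then o2 else 0)) (T3 + (if e3 then o3 else 0))"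
      using normal_form by simp
    moreover have "diag_isom e1 e2 e3 (2 * of_int (T1 + (if e1 then o1 else 0))) (2 * of_int (T2 + (if e2 then o2 else 0)))
        (2 * of_int (T3 + (if e3 then o3 else 0))) (g y) = g (\<delta> y)" for y
      using conj[of e1 e2 e3 "T1 + (if e1 then o1 else 0)" "T2 + (if e2 then o2 else 0)" "T3 + (if e3 then o3 else 0)" y]
      by (simp add: \<delta>)
    ultimately show "\<exists>\<gamma>\<in>parity_group C. \<forall>y. \<gamma> (g y) = g (\<delta> y)"
      using parity_groupI[of C] by blast
  qed (simp_all add: g_def)
qed

lemma orbit_space_classification:
  assumes "holonomy C \<subseteq> even_sign_changes" and "half_turns_are_screws C"
  shows "holonomy C = {(False, False, False)} \<and> orbit_space (parity_group C) homeomorphic_space torus3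
    \<or> holonomy C \<in> {{(False, False, False), (True, True, False)}, {(False, False, False), (True, False, True)},
         {(False, False, False), (False, True, True)}}
       \<and> orbit_space (parity_group C) homeomorphic_space half_turn_manifold
    \<or> holonomy C = even_sign_changes \<and> orbit_space (parity_group C) homeomorphic_space hantzsche_wendt"
  using holonomy_cases[OF assms(1)]
proof (elim disjE)
  assume "holonomy C = {(False, False, False)}"
  then show ?thesis using homeomorphic_torus3 by simp
next
  assume hol: "holonomy C = {(False, False, False), (True, True, False)}"
  then show ?thesis using homeomorphic_half_turn[OF hol assms(2)] by simp
next
  assume hol: "holonomy C = {(False, False, False), (True, False, True)}"
  then show ?thesis using homeomorphic_half_turn_axis2[OF hol assms(2)] by simp
next
  assume hol: "holonomy C = {(False, False, False), (False, True, True)}"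
  then show ?thesis using homeomorphic_half_turn_axis1[OF hol assms(2)] by simp
next
  assume hol: "holonomy C = even_sign_changes"
  then show ?thesis using homeomorphic_hantzsche_wendt[OF hol assms(2)] by simp
qed

end

section \<open>The kernel of a colouring\<close>

(* Computations in \<open>bit\<close> are done ring-theoretically, not via its xor/and normal form. *)
declare add_bit_eq_xor[simp del] mult_bit_eq_and[simp del]

lemma word_eval_Nil: "word_eval [] = id"
  by (simp add: word_eval_def)

lemma word_eval_Cons: "word_eval (i # w) = face_reflection i \<circ> word_eval w"
  by (simp add: word_eval_def)

lemma word_eval_append: "word_eval (w @ v) = word_eval w \<circ> word_eval v"
  by (induction w) (simp_all add: word_eval_Nil word_eval_Cons comp_assoc)

lemma face_reflection_diag_isom:
  "face_reflection F1 = diag_isom True False False 0 0 0"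
  "face_reflection F2 = diag_isom True False False 2 0 0"
  "face_reflection F3 = diag_isom False True False 0 0 0"
  "face_reflection F4 = diag_isom False True False 0 2 0"
  "face_reflection F5 = diag_isom False False True 0 0 0"
  "face_reflection F6 = diag_isom False False True 0 0 2"
  by (auto simp: fun_eq_iff face_reflection_def diag_isom_def vec3_eq_iff)

lemma of_nat_bit_eq_odd: "(of_nat n :: bit) = of_bool (odd n)"
  by (induction n) auto

lemma sum_list_map_count:
  fixes lam :: "face \<Rightarrow> bit^'k"
  shows "sum_list (map lam w) = (\<Sum>i\<in>UNIV. of_nat (count_list w i) *s lam i)"
proof (induction w)
  case Nil then show ?case by simp
next
  case (Cons x w)
  have "(\<Sum>i\<in>UNIV. of_nat (count_list (x # w) i) *s lam i) =
        (\<Sum>i\<in>UNIV. (if x = i then lam i else 0) + of_nat (count_list w i) *s lam i)"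
    by (rule sum.cong) (auto simp: vector_sadd_rdistrib)
  also have "\<dots> = lam x + (\<Sum>i\<in>UNIV. of_nat (count_list w i) *s lam i)"
    by (simp add: sum.distrib)
  finally show ?case using Cons by simp
qed

lemma word_eval_diag_isom:
  "\<exists>m1 m2 m3. word_eval w = diag_isom (odd (count_list w F1 + count_list w F2))
      (odd (count_list w F3 + count_list w F4)) (odd (count_list w F5 + count_list w F6))
      (2 * of_int m1) (2 * of_int m2) (2 * of_int m3) \<and>
     (odd m1 \<longleftrightarrow> odd (count_list w F2)) \<and> (odd m2 \<longleftrightarrow> odd (count_list w F4)) \<and>
     (odd m3 \<longleftrightarrow> odd (count_list w F6))"
proof (induction w)
  case Nil then show ?case
    by (intro exI[of _ 0]) (simp add: word_eval_Nil translation_zero)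
next
  case (Cons x w)
  then obtain m1 m2 m3 where h: "word_eval w = diag_isom (odd (count_list w F1 + count_list w F2))
      (odd (count_list w F3 + count_list w F4)) (odd (count_list w F5 + count_list w F6))
      (2 * of_int m1) (2 * of_int m2) (2 * of_int m3)"
     "(odd m1 \<longleftrightarrow> odd (count_list w F2))" "(odd m2 \<longleftrightarrow> odd (count_list w F4))"
     "(odd m3 \<longleftrightarrow> odd (count_list w F6))" by blast
  show ?case
  proof (cases x)
    case F1 then show ?thesis using h
      by (intro exI[of _ "-m1"] exI[of _ m2] exI[of _ m3]) (simp add: word_eval_Cons face_reflection_diag_isom diag_isom_comp)
  next
    case F2 then show ?thesis using h
      by (intro exI[of _ "1-m1"] exI[of _ m2] exI[of _ m3]) (simp add: word_eval_Cons face_reflection_diag_isom diag_isom_comp algebra_simps)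
  next
    case F3 then show ?thesis using h
      by (intro exI[of _ m1] exI[of _ "-m2"] exI[of _ m3]) (simp add: word_eval_Cons face_reflection_diag_isom diag_isom_comp)
  next
    case F4 then show ?thesis using h
      by (intro exI[of _ m1] exI[of _ "1-m2"] exI[of _ m3]) (simp add: word_eval_Cons face_reflection_diag_isom diag_isom_comp algebra_simps)
  next
    case F5 then show ?thesis using h
      by (intro exI[of _ m1] exI[of _ m2] exI[of _ "-m3"]) (simp add: word_eval_Cons face_reflection_diag_isom diag_isom_comp)
  next
    case F6 then show ?thesis using h
      by (intro exI[of _ m1] exI[of _ m2] exI[of _ "1-m3"]) (simp add: word_eval_Cons face_reflection_diag_isom diag_isom_comp algebra_simps)
  qed
qed

lemma coxeter_group_comp: "f \<in> coxeter_group \<Longrightarrow> g \<in> coxeter_group \<Longrightarrow> f \<circ> g \<in> coxeter_group"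
proof -
  assume "f \<in> coxeter_group" "g \<in> coxeter_group"
  then obtain w v where "f = word_eval w" "g = word_eval v"
    unfolding coxeter_group_def by blast
  then have "f \<circ> g = word_eval (w @ v)"
    by (simp add: word_eval_append)
  then show "f \<circ> g \<in> coxeter_group"
    unfolding coxeter_group_def by blast
qed

lemma id_in_coxeter_group: "id \<in> coxeter_group"
  unfolding coxeter_group_def by (auto simp flip: word_eval_Nil)

lemma face_reflection_in_coxeter_group: "face_reflection i \<in> coxeter_group"
  unfolding coxeter_group_def by (metis (mono_tags, lifting) comp_id mem_Collect_eq word_eval_Cons word_eval_Nil)

lemma diag_isom_in_coxeter_group:
  "diag_isom e1 e2 e3 (2 * of_int m1) (2 * of_int m2) (2 * of_int m3) \<in> coxeter_group"
proof -
  have reflections: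
    "diag_isom True False False 0 0 0 \<in> coxeter_group" "diag_isom True False False 2 0 0 \<in> coxeter_group"
    "diag_isom False True False 0 0 0 \<in> coxeter_group" "diag_isom False True False 0 2 0 \<in> coxeter_group"
    "diag_isom False False True 0 0 0 \<in> coxeter_group" "diag_isom False False True 0 0 2 \<in> coxeter_group"
    using face_reflection_in_coxeter_group[of F1] face_reflection_in_coxeter_group[of F2]
      face_reflection_in_coxeter_group[of F3] face_reflection_in_coxeter_group[of F4]
      face_reflection_in_coxeter_group[of F5] face_reflection_in_coxeter_group[of F6]
    by (simp_all add: face_reflection_diag_isom)
  have "diag_isom e1 False False 0 0 0 \<in> coxeter_group"
    using reflections(1) id_in_coxeter_group by (cases e1) (simp_all add: translation_zero)
  moreover have "diag_isom False e2 False 0 0 0 \<in> coxeter_group"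
    using reflections(3) id_in_coxeter_group by (cases e2) (simp_all add: translation_zero)
  moreover have "diag_isom False False e3 0 0 0 \<in> coxeter_group"
    using reflections(5) id_in_coxeter_group by (cases e3) (simp_all add: translation_zero)
  ultimately have "diag_isom e1 False False 0 0 0 \<circ> (diag_isom False e2 False 0 0 0 \<circ> diag_isom False False e3 0 0 0)
      \<in> coxeter_group"
    by (intro coxeter_group_comp)
  then have signs: "diag_isom e1 e2 e3 0 0 0 \<in> coxeter_group"
    by (simp add: diag_isom_comp)
  have "translation (of_int m1 * 2) (of_int m2 * 2) (of_int m3 * 2) \<in> coxeter_group"
  proof (rule translation_lattice_closed[OF id_in_coxeter_group coxeter_group_comp])
    show "translation 2 0 0 \<in> coxeter_group" "translation (- 2) 0 0 \<in> coxeter_group"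
        "translation 0 2 0 \<in> coxeter_group" "translation 0 (- 2) 0 \<in> coxeter_group"
        "translation 0 0 2 \<in> coxeter_group" "translation 0 0 (- 2) \<in> coxeter_group"
      using coxeter_group_comp[OF reflections(2) reflections(1)] coxeter_group_comp[OF reflections(1) reflections(2)]
        coxeter_group_comp[OF reflections(4) reflections(3)] coxeter_group_comp[OF reflections(3) reflections(4)]
        coxeter_group_comp[OF reflections(6) reflections(5)] coxeter_group_comp[OF reflections(5) reflections(6)]
      by (simp_all add: diag_isom_comp)
  qed
  from coxeter_group_comp[OF this signs] show ?thesis
    by (simp add: diag_isom_comp mult.commute)
qed

text \<open>The number of reflections in each face, mod 2, in any word evaluating to
  \<open>diag_isom e1 e2 e3 (2 m1) (2 m2) (2 m3)\<close>: face \<open>F(2j)\<close> occurs \<open>m\<^sub>j\<close> times and \<open>F(2j-1)\<close>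
  \<open>m\<^sub>j + e\<^sub>j\<close> times.\<close>

definition face_parities :: "bool \<Rightarrow> bool \<Rightarrow> bool \<Rightarrow> int \<Rightarrow> int \<Rightarrow> int \<Rightarrow> face \<Rightarrow> bit" where
  "face_parities e1 e2 e3 m1 m2 m3 i = (case i of F1 \<Rightarrow> of_bool (odd m1 \<noteq> e1) | F2 \<Rightarrow> of_bool (odd m1)
     | F3 \<Rightarrow> of_bool (odd m2 \<noteq> e2) | F4 \<Rightarrow> of_bool (odd m2)
     | F5 \<Rightarrow> of_bool (odd m3 \<noteq> e3) | F6 \<Rightarrow> of_bool (odd m3))"

definition kernel_member :: "(face \<Rightarrow> bit^'k) \<Rightarrow> bool \<Rightarrow> bool \<Rightarrow> bool \<Rightarrow> int \<Rightarrow> int \<Rightarrow> int \<Rightarrow> bool" where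
  "kernel_member lam e1 e2 e3 m1 m2 m3 \<longleftrightarrow> (\<Sum>i\<in>UNIV. face_parities e1 e2 e3 m1 m2 m3 i *s lam i) = 0"

lemma face_parities_count_list:
  assumes "odd m1 \<longleftrightarrow> odd (count_list w F2)" "odd m2 \<longleftrightarrow> odd (count_list w F4)"
     "odd m3 \<longleftrightarrow> odd (count_list w F6)"
  shows "face_parities (odd (count_list w F1 + count_list w F2))
      (odd (count_list w F3 + count_list w F4)) (odd (count_list w F5 + count_list w F6)) m1 m2 m3 i
     = of_nat (count_list w i)"
  using assms by (cases i) (auto simp: face_parities_def of_nat_bit_eq_odd)

lemma colouring_kernel_eq: "colouring_kernel lam = parity_group (kernel_member lam)"
  unfolding parity_group_def
proof (intro set_eqI iffI)
  fix g assume "g \<in> colouring_kernel lam"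
  then obtain w where g: "g = word_eval w" and s: "sum_list (map lam w) = 0"
    unfolding colouring_kernel_def by blast
  obtain m1 m2 m3 where h: "word_eval w = diag_isom (odd (count_list w F1 + count_list w F2))
      (odd (count_list w F3 + count_list w F4)) (odd (count_list w F5 + count_list w F6))
      (2 * of_int m1) (2 * of_int m2) (2 * of_int m3)"
     "(odd m1 \<longleftrightarrow> odd (count_list w F2))" "(odd m2 \<longleftrightarrow> odd (count_list w F4))"
     "(odd m3 \<longleftrightarrow> odd (count_list w F6))" using word_eval_diag_isom by blast
  have "kernel_member lam (odd (count_list w F1 + count_list w F2))
      (odd (count_list w F3 + count_list w F4)) (odd (count_list w F5 + count_list w F6)) m1 m2 m3"
    unfolding kernel_member_def face_parities_count_list[OF h(2-4)] using s sum_list_map_count[of lam w] by simp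
  then show "g \<in> {diag_isom e1 e2 e3 (2 * of_int m1) (2 * of_int m2) (2 * of_int m3)
     | e1 e2 e3 m1 m2 m3. kernel_member lam e1 e2 e3 m1 m2 m3}"
    using g h(1) by blast
next
  fix g assume "g \<in> {diag_isom e1 e2 e3 (2 * of_int m1) (2 * of_int m2) (2 * of_int m3)
     | e1 e2 e3 m1 m2 m3. kernel_member lam e1 e2 e3 m1 m2 m3}"
  then obtain e1 e2 e3 m1 m2 m3 where g: "g = diag_isom e1 e2 e3 (2 * of_int m1) (2 * of_int m2) (2 * of_int m3)"
    and c: "kernel_member lam e1 e2 e3 m1 m2 m3" by blast
  have "g \<in> {word_eval w | w. True}" using diag_isom_in_coxeter_group[of e1 e2 e3 m1 m2 m3] g
    unfolding coxeter_group_def by simp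
  then obtain w where w: "word_eval w = g" by auto
  obtain n1 n2 n3 where h: "word_eval w = diag_isom (odd (count_list w F1 + count_list w F2))
      (odd (count_list w F3 + count_list w F4)) (odd (count_list w F5 + count_list w F6))
      (2 * of_int n1) (2 * of_int n2) (2 * of_int n3)"
     "(odd n1 \<longleftrightarrow> odd (count_list w F2))" "(odd n2 \<longleftrightarrow> odd (count_list w F4))"
     "(odd n3 \<longleftrightarrow> odd (count_list w F6))" using word_eval_diag_isom by blast
  have eq: "e1 = odd (count_list w F1 + count_list w F2)" "e2 = odd (count_list w F3 + count_list w F4)"
    "e3 = odd (count_list w F5 + count_list w F6)" "m1 = n1" "m2 = n2" "m3 = n3"
    using h(1) w g by (simp_all add: diag_isom_eq_iff)
  have "sum_list (map lam w) = 0"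
    using c unfolding kernel_member_def eq sum_list_map_count[of lam w] face_parities_count_list[OF h(2-4)] .
  then show "g \<in> colouring_kernel lam" using w unfolding colouring_kernel_def by blast
qed

lemma sum_UNIV_face: "(\<Sum>i\<in>UNIV. f i) = f F1 + f F2 + f F3 + f F4 + f F5 + f F6"
  by (simp add: UNIV_face algebra_simps)

lemma of_bool_add_bit: "(of_bool a + of_bool b :: bit) = of_bool (a \<noteq> b)"
  by (cases a; cases b) simp_all

lemma face_parities_add: "face_parities (e1 \<noteq> f1) (e2 \<noteq> f2) (e3 \<noteq> f3) (m1 + n1) (m2 + n2) (m3 + n3) i =
   face_parities e1 e2 e3 m1 m2 m3 i + face_parities f1 f2 f3 n1 n2 n3 i"
  by (cases i) (auto simp: face_parities_def of_bool_add_bit)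

lemma kernel_member_add:
  assumes "kernel_member lam e1 e2 e3 m1 m2 m3" "kernel_member lam f1 f2 f3 n1 n2 n3"
  shows "kernel_member lam (e1 \<noteq> f1) (e2 \<noteq> f2) (e3 \<noteq> f3) (m1 + n1) (m2 + n2) (m3 + n3)"
  using assms unfolding kernel_member_def face_parities_add by (simp add: vector_sadd_rdistrib sum.distrib)

lemma kernel_member_parity:
  assumes "odd m1 = odd n1" "odd m2 = odd n2" "odd m3 = odd n3"
  shows "kernel_member lam e1 e2 e3 m1 m2 m3 = kernel_member lam e1 e2 e3 n1 n2 n3"
proof -
  have "face_parities e1 e2 e3 m1 m2 m3 = face_parities e1 e2 e3 n1 n2 n3"
    using assms by (auto simp: fun_eq_iff face_parities_def split: face.split)
  then show ?thesis unfolding kernel_member_def by simp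
qed

lemma kernel_member_zero: "kernel_member lam False False False 0 0 0"
  unfolding kernel_member_def by (simp add: face_parities_def sum_UNIV_face)

lemma parity_subgroup_kernel_member: "parity_subgroup (kernel_member lam)"
  by unfold_locales (fact kernel_member_add kernel_member_parity kernel_member_zero)+

lemma orientable_holonomy:
  assumes "orientable_colouring lam"
  shows "holonomy (kernel_member lam) \<subseteq> even_sign_changes"
proof
  fix e assume "e \<in> holonomy (kernel_member lam)"
  then obtain e1 e2 e3 m1 m2 m3 where e: "e = (e1, e2, e3)" and "kernel_member lam e1 e2 e3 m1 m2 m3"
    unfolding holonomy_def by blast
  then have "diag_isom e1 e2 e3 (2 * of_int m1) (2 * of_int m2) (2 * of_int m3) \<in> colouring_kernel lam"
    unfolding colouring_kernel_eq parity_group_def by blast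
  then have "flip_sign e1 * flip_sign e2 * flip_sign e3 > 0"
    using assms det_diag_isom unfolding orientable_colouring_def by metis
  then show "e \<in> even_sign_changes"
    unfolding e even_sign_changes_def by (cases e1; cases e2; cases e3) simp_all
qed

lemma bit_add_eq_0_iff: "(a::bit) + b = 0 \<longleftrightarrow> a = b"
  by (cases a; cases b) simp_all

lemma bit_vec_add_eq_0_iff: "(a::bit^'k) + b = 0 \<longleftrightarrow> a = b"
  by (simp add: vec_eq_iff bit_add_eq_0_iff)

lemma proper_colouring_distinct:
  assumes "proper_colouring lam" "a \<in> {F1, F2}" "b \<in> {F3, F4}" "c \<in> {F5, F6}"
  shows "lam a \<noteq> lam b" "lam a \<noteq> lam c" "lam b \<noteq> lam c"
proof -
  have "card {lam a, lam b, lam c} = 3" using assms unfolding proper_colouring_def by blast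
  then show "lam a \<noteq> lam b" "lam a \<noteq> lam c" "lam b \<noteq> lam c"
    by (auto simp: card_insert_if split: if_splits)
qed

text \<open>For an element of holonomy \<open>(T,T,F)\<close> with \<open>m\<^sub>3\<close> even, the colour relation says
  \<open>\<lambda> a = \<lambda> b\<close> for faces \<open>a \<in> {F1, F2}\<close>, \<open>b \<in> {F3, F4}\<close> meeting at a vertex.\<close>

lemma proper_half_turns_are_screws:
  assumes "proper_colouring lam"
  shows "half_turns_are_screws (kernel_member lam)"
  unfolding half_turns_are_screws_def
proof (intro allI conjI impI)
  note distinct = proper_colouring_distinct[OF assms]
  fix m1 m2 m3
  show "odd m3" if "kernel_member lam True True False m1 m2 m3"
    using that distinct(1)[of F1 F3 F5] distinct(1)[of F2 F3 F5] distinct(1)[of F1 F4 F5] distinct(1)[of F2 F4 F5]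
    by (cases "odd m1"; cases "odd m2"; cases "odd m3") (auto simp: kernel_member_def face_parities_def sum_UNIV_face bit_vec_add_eq_0_iff)
  show "odd m2" if "kernel_member lam True False True m1 m2 m3"
    using that distinct(2)[of F1 F3 F5] distinct(2)[of F2 F3 F5] distinct(2)[of F1 F3 F6] distinct(2)[of F2 F3 F6]
    by (cases "odd m1"; cases "odd m2"; cases "odd m3") (auto simp: kernel_member_def face_parities_def sum_UNIV_face bit_vec_add_eq_0_iff)
  show "odd m1" if "kernel_member lam False True True m1 m2 m3"
    using that distinct(3)[of F1 F3 F5] distinct(3)[of F1 F4 F5] distinct(3)[of F1 F3 F6] distinct(3)[of F1 F4 F6]
    by (cases "odd m1"; cases "odd m2"; cases "odd m3") (auto simp: kernel_member_def face_parities_def sum_UNIV_face bit_vec_add_eq_0_iff)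
qed

section \<open>Row space and holonomy\<close>

lemma if_one_zero_smult: "(if P then (1::'a::ring_1) else 0) *s x = (if P then x else 0)"
  by simp

lemma sum_delta_diff_mult:
  fixes x s :: "'a::finite \<Rightarrow> 'b::comm_ring_1"
  shows "(\<Sum>i\<in>UNIV. ((if i = j then 1 else 0) - s i) * x i) = x j - (\<Sum>i\<in>UNIV. s i * x i)"
proof -
  have "(\<Sum>i\<in>UNIV. ((if i = j then 1 else 0) - s i) * x i) =
     (\<Sum>i\<in>UNIV. (if i = j then x i else 0)) - (\<Sum>i\<in>UNIV. s i * x i)"
  proof -
    have "(\<Sum>i\<in>UNIV. (if i = j then 1 else 0) * x i) = (\<Sum>i\<in>UNIV. (if i = j then x i else 0))"
      by (rule sum.cong) auto
    then show ?thesis by (simp add: left_diff_distrib sum_subtractf)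
  qed
  then show ?thesis by simp
qed

lemma span_range_subset_combinations:
  fixes f :: "'a::finite \<Rightarrow> 'b::field^'n"
  shows "vec.span (range f) \<subseteq> {\<Sum>i\<in>UNIV. c i *s f i | c. True}"
proof (rule vec.span_minimal)
  show "range f \<subseteq> {\<Sum>i\<in>UNIV. c i *s f i | c. True}"
  proof
    fix y assume "y \<in> range f"
    then obtain j where y: "y = f j" by blast
    have "(\<Sum>i\<in>UNIV. (if i = j then 1 else 0) *s f i) = f j"
      by (simp add: if_one_zero_smult)
    then show "y \<in> {\<Sum>i\<in>UNIV. c i *s f i | c. True}" unfolding y
      by (intro CollectI exI[of _ "\<lambda>i. if i = j then 1 else 0"]) simp
  qed
  show "vec.subspace {\<Sum>i\<in>UNIV. c i *s f i | c. True}"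
  proof (rule vec.subspaceI)
    show "0 \<in> {\<Sum>i\<in>UNIV. c i *s f i | c. True}"
      by (rule CollectI, rule exI[of _ "\<lambda>_. 0"]) simp
    fix x y assume "x \<in> {\<Sum>i\<in>UNIV. c i *s f i | c. True}" "y \<in> {\<Sum>i\<in>UNIV. c i *s f i | c. True}"
    then obtain c d where xy: "x = (\<Sum>i\<in>UNIV. c i *s f i)" "y = (\<Sum>i\<in>UNIV. d i *s f i)" by blast
    have "x + y = (\<Sum>i\<in>UNIV. (c i + d i) *s f i)"
      unfolding xy by (simp add: vec_eq_iff sum.distrib algebra_simps)
    then show "x + y \<in> {\<Sum>i\<in>UNIV. c i *s f i | c. True}"
      by (intro CollectI exI[of _ "\<lambda>i. c i + d i"]) simp
  next
    fix a x assume "x \<in> {\<Sum>i\<in>UNIV. c i *s f i | c. True}"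
    then obtain c where xy: "x = (\<Sum>i\<in>UNIV. c i *s f i)" by blast
    have "a *s x = (\<Sum>i\<in>UNIV. (a * c i) *s f i)"
      unfolding xy by (simp add: vec_eq_iff sum_distrib_left algebra_simps)
    then show "a *s x \<in> {\<Sum>i\<in>UNIV. c i *s f i | c. True}"
      by (intro CollectI exI[of _ "\<lambda>i. a * c i"]) simp
  qed
qed

definition colour_relation :: "(face \<Rightarrow> bit^'k) \<Rightarrow> (face \<Rightarrow> bit) \<Rightarrow> bool" where
  "colour_relation lam c \<longleftrightarrow> (\<Sum>i\<in>UNIV. c i *s lam i) = 0"

lemma colour_relation_iff: "colour_relation lam c \<longleftrightarrow> (\<forall>m. (\<Sum>i\<in>UNIV. c i * lam i $ m) = 0)"
  unfolding colour_relation_def by (simp add: vec_eq_iff)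

lemma row_space_orthogonal:
  fixes lam :: "face \<Rightarrow> bit^'k"
  assumes "v \<in> row_space lam" "colour_relation lam c"
  shows "(\<Sum>i\<in>UNIV. c i * v $ i) = 0"
proof -
  from assms(1) span_range_subset_combinations[of "defining_row lam"] obtain w where
    v: "v = (\<Sum>m\<in>UNIV. w m *s defining_row lam m)"
    unfolding row_space_def by blast
  have "(\<Sum>i\<in>UNIV. c i * v $ i) = (\<Sum>i\<in>UNIV. \<Sum>m\<in>UNIV. w m * (c i * lam i $ m))"
    unfolding v by (simp add: defining_row_def sum_distrib_left algebra_simps)
  also have "\<dots> = (\<Sum>m\<in>UNIV. w m * (\<Sum>i\<in>UNIV. c i * lam i $ m))"
    by (subst sum.swap) (simp add: sum_distrib_left)
  also have "\<dots> = 0" using assms(2) unfolding colour_relation_iff by simp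
  finally show ?thesis .
qed

lemma colouring_dual_coefficients:
  fixes lam :: "face \<Rightarrow> bit^'k"
  assumes "colouring lam"
  obtains d where "\<And>m m'. (\<Sum>i\<in>UNIV. d m i * lam i $ m') = (if m = m' then 1 else 0)"
proof -
  have "\<exists>c. axis m 1 = (\<Sum>i\<in>UNIV. c i *s lam i)" for m
  proof -
    have "axis m 1 \<in> vec.span (range lam)"
      using assms unfolding colouring_def by simp
    then show ?thesis
      using span_range_subset_combinations[of lam] by blast
  qed
  then obtain d where d: "\<And>m. axis m 1 = (\<Sum>i\<in>UNIV. d m i *s lam i)"
    by metis
  have "(\<Sum>i\<in>UNIV. d m i * lam i $ m') = (if m = m' then 1 else 0)" for m m'
    using arg_cong[OF d[of m, symmetric], of "\<lambda>x. x $ m'"] by (simp add: axis_def)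
  then show ?thesis by (rule that)
qed

text \<open>Conversely, for a colouring the row space is exactly the annihilator of the relations: with
  \<open>d\<close> dual to the colours, \<open>c i = \<delta>\<^sub>i\<^sub>j - \<Sum>\<^sub>m \<lambda>(j)\<^sub>m d\<^sub>m\<^sub>i\<close> is a relation, and pairing it with \<open>v\<close>
  expresses \<open>v\<^sub>j\<close> through the rows.\<close>

lemma orthogonal_in_row_space:
  fixes lam :: "face \<Rightarrow> bit^'k"
  assumes "colouring lam"
    and perp: "\<And>c. colour_relation lam c \<Longrightarrow> (\<Sum>i\<in>UNIV. c i * v $ i) = 0"
  shows "v \<in> row_space lam"
proof -
  obtain d where dual: "\<And>m m'. (\<Sum>i\<in>UNIV. d m i * lam i $ m') = (if m = m' then 1 else 0)"
    using colouring_dual_coefficients[OF assms(1)] by blast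
  define w where "w m = (\<Sum>i\<in>UNIV. d m i * v $ i)" for m
  have pairing: "(\<Sum>i\<in>UNIV. ((if i = j then 1 else 0) - (\<Sum>m\<in>UNIV. lam j $ m * d m i)) * x i)
      = x j - (\<Sum>m\<in>UNIV. lam j $ m * (\<Sum>i\<in>UNIV. d m i * x i))" for j and x :: "face \<Rightarrow> bit"
    unfolding sum_delta_diff_mult sum_distrib_right sum_distrib_left mult.assoc
    by (subst sum.swap) (rule refl)
  have "v $ j = (\<Sum>m\<in>UNIV. w m * lam j $ m)" for j
  proof -
    define c where "c i = (if i = j then 1 else 0) - (\<Sum>m\<in>UNIV. lam j $ m * d m i)" for i
    have "(\<Sum>i\<in>UNIV. c i * lam i $ m') = 0" for m'
      using pairing[of j "\<lambda>i. lam i $ m'"]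
      by (simp add: c_def dual if_distrib cong: if_cong)
    then have "(\<Sum>i\<in>UNIV. c i * v $ i) = 0"
      by (intro perp) (simp add: colour_relation_iff)
    then show ?thesis
      using pairing[of j "\<lambda>i. v $ i"] by (simp add: c_def w_def mult.commute bit_add_eq_0_iff)
  qed
  then have "v = (\<Sum>m\<in>UNIV. w m *s defining_row lam m)"
    by (simp add: vec_eq_iff defining_row_def mult.commute)
  also have "\<dots> \<in> row_space lam"
    unfolding row_space_def by (intro vec.span_sum vec.span_scale vec.span_base) simp
  finally show ?thesis .
qed

lemma in_row_space_iff_orthogonal:
  fixes lam :: "face \<Rightarrow> bit^'k"
  assumes "colouring lam"
  shows "v \<in> row_space lam \<longleftrightarrow> (\<forall>c. colour_relation lam c \<longrightarrow> (\<Sum>i\<in>UNIV. c i * v $ i) = 0)"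
  using row_space_orthogonal orthogonal_in_row_space[OF assms] by blast

lemma sum_mult_axis_pair: "(\<Sum>i\<in>UNIV. c i * (axis p 1 + axis q 1 :: bit^face) $ i) = c p + c q"
proof -
  have "(\<Sum>i\<in>UNIV. c i * (axis p 1 + axis q 1 :: bit^face) $ i) =
     (\<Sum>i\<in>UNIV. (if i = p then c i else 0) + (if i = q then c i else 0))"
    by (rule sum.cong) (auto simp: axis_def)
  then show ?thesis by (simp only: sum.distrib) simp
qed

lemma pair_sum_in_row_space_iff:
  fixes lam :: "face \<Rightarrow> bit^'k"
  assumes "colouring lam"
  shows "axis p 1 + axis q 1 \<in> row_space lam \<longleftrightarrow> (\<forall>c. colour_relation lam c \<longrightarrow> c p = c q)"
  unfolding in_row_space_iff_orthogonal[OF assms] sum_mult_axis_pair bit_add_eq_0_iff ..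

lemma kernel_member_iff_colour_relation: "kernel_member lam e1 e2 e3 m1 m2 m3 \<longleftrightarrow> colour_relation lam (face_parities e1 e2 e3 m1 m2 m3)"
  unfolding kernel_member_def colour_relation_def ..

lemma colour_relation_kernel_member:
  assumes "colour_relation lam c"
  shows "\<exists>e1 e2 e3 m1 m2 m3. kernel_member lam e1 e2 e3 m1 m2 m3 \<and> e1 = (c F1 \<noteq> c F2) \<and>
     e2 = (c F3 \<noteq> c F4) \<and> e3 = (c F5 \<noteq> c F6)"
proof -
  let ?m = "\<lambda>f. if c f = 1 then 1 else (0::int)"
  have "face_parities (c F1 \<noteq> c F2) (c F3 \<noteq> c F4) (c F5 \<noteq> c F6) (?m F2) (?m F4) (?m F6) = c"
  proof
    fix i show "face_parities (c F1 \<noteq> c F2) (c F3 \<noteq> c F4) (c F5 \<noteq> c F6) (?m F2) (?m F4) (?m F6) i = c i"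
      by (cases i; cases "c F1"; cases "c F2"; cases "c F3"; cases "c F4"; cases "c F5"; cases "c F6")
        (simp_all add: face_parities_def)
  qed
  then show ?thesis using assms unfolding kernel_member_iff_colour_relation by metis
qed

lemma holonomy_kernel_member:
  "holonomy (kernel_member lam) = {(c F1 \<noteq> c F2, c F3 \<noteq> c F4, c F5 \<noteq> c F6) | c. colour_relation lam c}"
proof (intro set_eqI iffI)
  fix e assume "e \<in> holonomy (kernel_member lam)"
  then obtain e1 e2 e3 m1 m2 m3 where "e = (e1, e2, e3)" and "kernel_member lam e1 e2 e3 m1 m2 m3"
    unfolding holonomy_def by blast
  then show "e \<in> {(c F1 \<noteq> c F2, c F3 \<noteq> c F4, c F5 \<noteq> c F6) | c. colour_relation lam c}"
    unfolding kernel_member_iff_colour_relation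
    by (intro CollectI exI[of _ "face_parities e1 e2 e3 m1 m2 m3"]) (auto simp: face_parities_def)
next
  fix e assume "e \<in> {(c F1 \<noteq> c F2, c F3 \<noteq> c F4, c F5 \<noteq> c F6) | c. colour_relation lam c}"
  then show "e \<in> holonomy (kernel_member lam)"
    unfolding holonomy_def using colour_relation_kernel_member by fastforce
qed

lemma pair_sums_in_row_space_iff_holonomy:
  fixes lam :: "face \<Rightarrow> bit^'k"
  assumes "colouring lam"
  shows "axis F1 1 + axis F2 1 \<in> row_space lam \<longleftrightarrow> (\<forall>(a, b, c) \<in> holonomy (kernel_member lam). \<not> a)"
    and "axis F3 1 + axis F4 1 \<in> row_space lam \<longleftrightarrow> (\<forall>(a, b, c) \<in> holonomy (kernel_member lam). \<not> b)"
    and "axis F5 1 + axis F6 1 \<in> row_space lam \<longleftrightarrow> (\<forall>(a, b, c) \<in> holonomy (kernel_member lam). \<not> c)"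
  unfolding pair_sum_in_row_space_iff[OF assms] holonomy_kernel_member by blast+

section \<open>The classification\<close>

lemma Int_insert3_cases:
  "A \<inter> {x, y, z} = {x, y, z} \<longleftrightarrow> x \<in> A \<and> y \<in> A \<and> z \<in> A"
  "A \<inter> {x, y, z} = {} \<longleftrightarrow> x \<notin> A \<and> y \<notin> A \<and> z \<notin> A"
  "{} \<noteq> A \<inter> {x, y, z} \<and> A \<inter> {x, y, z} \<subset> {x, y, z} \<longleftrightarrow>
     (x \<in> A \<or> y \<in> A \<or> z \<in> A) \<and> \<not> (x \<in> A \<and> y \<in> A \<and> z \<in> A)"
  by blast+

theorem proposition3p1:
  fixes lam :: "face \<Rightarrow> bit^'k"
  assumes "CARD('k) \<ge> 3"
    and "proper_colouring lam"
    and "orientable_colouring lam"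
  shows "(row_space lam \<inter> T_set = T_set \<longrightarrow> (M_lam lam) homeomorphic_space torus3)
       \<and> ({} \<noteq> row_space lam \<inter> T_set \<and> row_space lam \<inter> T_set \<subset> T_set
            \<longrightarrow> (M_lam lam) homeomorphic_space half_turn_manifold)
       \<and> (row_space lam \<inter> T_set = {} \<longrightarrow> (M_lam lam) homeomorphic_space hantzsche_wendt)"
proof -
  \<comment> \<open>the hypothesis on \<open>CARD('k)\<close> is implied by properness and not needed\<close>
  interpret parity_subgroup "kernel_member lam"
    by (rule parity_subgroup_kernel_member)
  have "colouring lam"
    using assms(2) unfolding proper_colouring_def by blast
  have M: "M_lam lam = orbit_space (parity_group (kernel_member lam))"
    unfolding M_lam_def colouring_kernel_eq ..
  note reduce = T_set_def Int_insert3_cases pair_sums_in_row_space_iff_holonomy[OF \<open>colouring lam\<close>] M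
  from orbit_space_classification[OF orientable_holonomy[OF assms(3)] proper_half_turns_are_screws[OF assms(2)]]
  show ?thesis
  proof (elim disjE conjE)
    assume "holonomy (kernel_member lam) = {(False, False, False)}"
      and "orbit_space (parity_group (kernel_member lam)) homeomorphic_space torus3"
    then show ?thesis unfolding reduce by simp
  next
    assume "holonomy (kernel_member lam) \<in> {{(False, False, False), (True, True, False)},
        {(False, False, False), (True, False, True)}, {(False, False, False), (False, True, True)}}"
      and "orbit_space (parity_group (kernel_member lam)) homeomorphic_space half_turn_manifold"
    then show ?thesis unfolding reduce by (elim insertE emptyE) simp_all
  next
    assume "holonomy (kernel_member lam) = even_sign_changes"
      and "orbit_space (parity_group (kernel_member lam)) homeomorphic_space hantzsche_wendt"
    then show ?thesis unfolding reduce by (simp add: even_sign_changes_def)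
  qed
qed

end
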